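(* Let $\mathcal F$ be a saturated fusion system on a finite $p$-group $S$, and let $\mathcal G$ be a saturated subsystem of $\mathcal F$ on a subgroup $T\le S$. Suppose there exists an $\mathcal F$-centric subgroup $Q\le T$ with $\operatorname{Hom}_\mathcal F(Q,T)=\operatorname{Hom}_\mathcal G(Q,T)$. Then $\operatorname{Aut}_\mathcal F(T)=\operatorname{Aut}_\mathcal G(T)$ and $T=S$.
   Context: Fusion systems: Let $S$ be a finite $p$-group. A fusion system $\mathcal F$ on $S$ is a category whose objects are the subgroups of $S$ and whose morphism sets $\operatorname{Hom}_\mathcal F(P,R)$ are sets of injective group homomorphisms $P\to R$, such that (i) every conjugation map $x\mapsto gxg^{-1}$, $g\in S$, from $P$ to $R$ lies in $\operatorname{Hom}_\mathcal F(P,R)$, and (ii) every $\varphi\in\operatorname{Hom}_\mathcal F(P,R)$ factors as an isomorphism $P\to\varphi(P)$ in $\mathcal F$ with inverse in $\mathcal F$ followed by inclusion. A subsystem $\mathcal G$ on $T\le S$ is a fusion system on $T$ with $\operatorname{Hom}_\mathcal G(P,R)\subseteq\operatorname{Hom}_\mathcal F(P,R)$. $Q$ is fully $\mathcal F$-normalized (resp. centralized) if $|N_S(Q)|$ (resp. $|C_S(Q)|$) is maximal among $\mathcal F$-conjugates of $Q$; $Q$ is $\mathcal F$-centric if $C_S(Q')=Z(Q')$ for every $\mathcal F$-conjugate $Q'$. For $\varphi\in\operatorname{Hom}_\mathcal F(Q,S)$, $N_\varphi=\{g\in N_S(Q):\varphi c_g|_Q\varphi^{-1}\in\operatorname{Aut}_S(\varphi(Q))\}$,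 $\operatorname{Aut}_S(\cdot)$ denoting automorphisms induced by conjugation by elements of $S$. $\mathcal F$ is saturated if every fully normalized $Q$ is fully centralized with $\operatorname{Aut}_S(Q)$ a Sylow $p$-subgroup of $\operatorname{Aut}_\mathcal F(Q)$, and every $\varphi\in\operatorname{Hom}_\mathcal F(Q,S)$ with $\varphi(Q)$ fully centralized extends to a morphism of $\mathcal F$ defined on $N_\varphi$. *)

theory Defs
  imports "HOL-Algebra.Group" "HOL-Computational_Algebra.Primes"
begin

text \<open>A fusion system on S is given by a function Hom assigning to subgroups P, R of S
  a set of maps P to R; maps are represented extensionally (undefined outside P).
  A subsystem on T is a fusion system on the group S with carrier restricted to T.\<close>

definition fs_conj :: "('a, 'b) monoid_scheme \<Rightarrow> 'a \<Rightarrow> 'a \<Rightarrow> 'a" where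
  "fs_conj S g = (\<lambda>x. g \<otimes>\<^bsub>S\<^esub> x \<otimes>\<^bsub>S\<^esub> inv\<^bsub>S\<^esub> g)"

definition fs_N :: "('a, 'b) monoid_scheme \<Rightarrow> 'a set \<Rightarrow> 'a set" where
  "fs_N S Q = {g \<in> carrier S. fs_conj S g ` Q = Q}"

definition fs_C :: "('a, 'b) monoid_scheme \<Rightarrow> 'a set \<Rightarrow> 'a set" where
  "fs_C S Q = {g \<in> carrier S. \<forall>x\<in>Q. g \<otimes>\<^bsub>S\<^esub> x = x \<otimes>\<^bsub>S\<^esub> g}"

definition fs_Z :: "('a, 'b) monoid_scheme \<Rightarrow> 'a set \<Rightarrow> 'a set" where
  "fs_Z S Q = Q \<inter> fs_C S Q"

definition inj_hom :: "('a, 'b) monoid_scheme \<Rightarrow> 'a set \<Rightarrow> 'a set \<Rightarrow> ('a \<Rightarrow> 'a) set" where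
  "inj_hom S P R = {\<phi>. \<phi> \<in> extensional P \<and> \<phi> ` P \<subseteq> R \<and> inj_on \<phi> P \<and>
      (\<forall>x\<in>P. \<forall>y\<in>P. \<phi> (x \<otimes>\<^bsub>S\<^esub> y) = \<phi> x \<otimes>\<^bsub>S\<^esub> \<phi> y)}"

definition AutS :: "('a, 'b) monoid_scheme \<Rightarrow> 'a set \<Rightarrow> ('a \<Rightarrow> 'a) set" where
  "AutS S Q = {restrict (fs_conj S g) Q | g. g \<in> fs_N S Q}"

definition p_group :: "nat \<Rightarrow> ('a, 'b) monoid_scheme \<Rightarrow> bool" where
  "p_group p S \<longleftrightarrow> prime p \<and> group S \<and> finite (carrier S) \<and> (\<exists>n. card (carrier S) = p ^ n)"

definition fusion_system ::
  "('a, 'b) monoid_scheme \<Rightarrow> ('a set \<Rightarrow> 'a set \<Rightarrow> ('a \<Rightarrow> 'a) set) \<Rightarrow> bool" where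
  "fusion_system S Hom \<longleftrightarrow>
     (\<forall>P R. subgroup P S \<longrightarrow> subgroup R S \<longrightarrow> Hom P R \<subseteq> inj_hom S P R) \<and>
     \<comment> \<open>composition\<close>
     (\<forall>P Q R \<phi> \<psi>. subgroup P S \<longrightarrow> subgroup Q S \<longrightarrow> subgroup R S \<longrightarrow>
        \<phi> \<in> Hom P Q \<longrightarrow> \<psi> \<in> Hom Q R \<longrightarrow> restrict (\<psi> \<circ> \<phi>) P \<in> Hom P R) \<and>
     \<comment> \<open>(i) conjugation maps\<close>
     (\<forall>P R g. subgroup P S \<longrightarrow> subgroup R S \<longrightarrow> g \<in> carrier S \<longrightarrow>
        fs_conj S g ` P \<subseteq> R \<longrightarrow> restrict (fs_conj S g) P \<in> Hom P R) \<and>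
     \<comment> \<open>(ii) factorisation as an isomorphism in F (with inverse in F) followed by inclusion\<close>
     (\<forall>P R \<phi>. subgroup P S \<longrightarrow> subgroup R S \<longrightarrow> \<phi> \<in> Hom P R \<longrightarrow>
        \<phi> \<in> Hom P (\<phi> ` P) \<and> restrict (inv_into P \<phi>) (\<phi> ` P) \<in> Hom (\<phi> ` P) P)"

definition fully_normalized ::
  "('a, 'b) monoid_scheme \<Rightarrow> ('a set \<Rightarrow> 'a set \<Rightarrow> ('a \<Rightarrow> 'a) set) \<Rightarrow> 'a set \<Rightarrow> bool" where
  "fully_normalized S Hom Q \<longleftrightarrow>
     (\<forall>\<phi>\<in>Hom Q (carrier S). card (fs_N S (\<phi> ` Q)) \<le> card (fs_N S Q))"

definition fully_centralized ::
  "('a, 'b) monoid_scheme \<Rightarrow> ('a set \<Rightarrow> 'a set \<Rightarrow> ('a \<Rightarrow> 'a) set) \<Rightarrow> 'a set \<Rightarrow> bool" where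
  "fully_centralized S Hom Q \<longleftrightarrow>
     (\<forall>\<phi>\<in>Hom Q (carrier S). card (fs_C S (\<phi> ` Q)) \<le> card (fs_C S Q))"

definition centric ::
  "('a, 'b) monoid_scheme \<Rightarrow> ('a set \<Rightarrow> 'a set \<Rightarrow> ('a \<Rightarrow> 'a) set) \<Rightarrow> 'a set \<Rightarrow> bool" where
  "centric S Hom Q \<longleftrightarrow>
     (\<forall>\<phi>\<in>Hom Q (carrier S). fs_C S (\<phi> ` Q) = fs_Z S (\<phi> ` Q))"

definition sylow_in :: "nat \<Rightarrow> ('a \<Rightarrow> 'a) set \<Rightarrow> ('a \<Rightarrow> 'a) set \<Rightarrow> bool" where
  "sylow_in p H A \<longleftrightarrow> H \<subseteq> A \<and> card H = p ^ multiplicity p (card A)"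

definition N_phi ::
  "('a, 'b) monoid_scheme \<Rightarrow> 'a set \<Rightarrow> ('a \<Rightarrow> 'a) \<Rightarrow> 'a set" where
  "N_phi S Q \<phi> = {g \<in> fs_N S Q.
      restrict (\<phi> \<circ> fs_conj S g \<circ> inv_into Q \<phi>) (\<phi> ` Q) \<in> AutS S (\<phi> ` Q)}"

definition saturated ::
  "nat \<Rightarrow> ('a, 'b) monoid_scheme \<Rightarrow> ('a set \<Rightarrow> 'a set \<Rightarrow> ('a \<Rightarrow> 'a) set) \<Rightarrow> bool" where
  "saturated p S Hom \<longleftrightarrow> fusion_system S Hom \<and>
     (\<forall>Q. subgroup Q S \<longrightarrow> fully_normalized S Hom Q \<longrightarrow>
        fully_centralized S Hom Q \<and> sylow_in p (AutS S Q) (Hom Q Q)) \<and>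
     (\<forall>Q \<phi>. subgroup Q S \<longrightarrow> \<phi> \<in> Hom Q (carrier S) \<longrightarrow>
        fully_centralized S Hom (\<phi> ` Q) \<longrightarrow>
        (\<exists>\<psi> \<in> Hom (N_phi S Q \<phi>) (carrier S). \<forall>x\<in>Q. \<psi> x = \<phi> x))"

definition subsystem ::
  "('a, 'b) monoid_scheme \<Rightarrow> ('a set \<Rightarrow> 'a set \<Rightarrow> ('a \<Rightarrow> 'a) set) \<Rightarrow> 'a set
     \<Rightarrow> ('a set \<Rightarrow> 'a set \<Rightarrow> ('a \<Rightarrow> 'a) set) \<Rightarrow> bool" where
  "subsystem S HomF T HomG \<longleftrightarrow> subgroup T S \<and> fusion_system (S\<lparr>carrier := T\<rparr>) HomG \<and>
     (\<forall>P R. subgroup P S \<longrightarrow> subgroup R S \<longrightarrow> P \<subseteq> T \<longrightarrow> R \<subseteq> T \<longrightarrow> HomG P R \<subseteq> HomF P R)"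

end

theory Submission
  imports Defs "HOL-Algebra.Group_Action" "HOL-Algebra.Left_Coset" "HOL-Algebra.Multiplicative_Group"
begin

text \<open>Induction on \<open>P\<close> with \<open>Q \<le> P \<le> T\<close> shows \<open>Hom\<^sub>\<F>(P, T) = Hom\<^sub>\<G>(P, T)\<close>. Since
  normalizers grow in \<open>p\<close>-groups, \<open>P\<close> has a normal subgroup \<open>P\<^sub>0\<close> with \<open>Q \<le> P\<^sub>0 < P\<close>, and
  \<open>P\<^sub>0\<close> is centric because it contains \<open>Q\<close>. Given \<open>\<phi> \<in> Hom\<^sub>\<F>(P, T)\<close>, its restriction to
  \<open>P\<^sub>0\<close> lies in \<open>\<G>\<close> by induction, and saturation of \<open>\<G>\<close> extends it to some
  \<open>\<psi> \<in> Hom\<^sub>\<G>(P, T)\<close>. Then \<open>\<psi>\<^sup>-\<^sup>1\<phi> \<in> Aut\<^sub>\<F>(P)\<close> is trivial on the centric normal subgroup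
  \<open>P\<^sub>0\<close>, so by saturation of \<open>\<F>\<close> it is conjugation by an element of \<open>P\<^sub>0\<close>, and \<open>\<phi>\<close> lies
  in \<open>\<G>\<close>. For \<open>P = T\<close> this gives \<open>Aut\<^sub>\<F>(T) = Aut\<^sub>\<G>(T)\<close>. If \<open>T < S\<close>, an element
  \<open>g \<in> N\<^sub>S(T) - T\<close> induces a \<open>p\<close>-element of \<open>Aut\<^sub>\<G>(T)\<close>, which by Sylow's theorem is
  conjugate into \<open>Aut\<^sub>T(T)\<close>; this puts \<open>g\<close> into \<open>T C\<^sub>S(T) = T\<close>.\<close>

no_notation (ASCII) subset_mset (infix \<open><#\<close> 50) \<comment> \<open>\<open><#\<close> denotes left cosets below\<close>

section \<open>Fixed points of \<open>p\<close>-group actions\<close>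

lemma group_action_of_action_laws:
  assumes C: "group C"
    and closed: "\<And>c x. c \<in> carrier C \<Longrightarrow> x \<in> X \<Longrightarrow> act c x \<in> X"
    and one: "\<And>x. x \<in> X \<Longrightarrow> act \<one>\<^bsub>C\<^esub> x = x"
    and mult: "\<And>c d x. c \<in> carrier C \<Longrightarrow> d \<in> carrier C \<Longrightarrow> x \<in> X \<Longrightarrow>
                 act (c \<otimes>\<^bsub>C\<^esub> d) x = act c (act d x)"
  shows "group_action C X (\<lambda>c. restrict (act c) X)"
proof -
  interpret C: group C by fact
  have bij: "restrict (act c) X \<in> Bij X" if c: "c \<in> carrier C" for c
  proof -
    have "act (inv\<^bsub>C\<^esub> c) (act c x) = x" "act c (act (inv\<^bsub>C\<^esub> c) x) = x" if "x \<in> X" for x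
      using mult[of "inv\<^bsub>C\<^esub> c" c x] mult[of c "inv\<^bsub>C\<^esub> c" x] one[of x] c that by simp_all
    then have "bij_betw (act c) X X"
      using closed c by (intro bij_betw_byWitness[where f' = "act (inv\<^bsub>C\<^esub> c)"]) auto
    then show ?thesis
      by (simp add: Bij_def bij_betw_def inj_on_def)
  qed
  show ?thesis
    unfolding group_action_def group_hom_def group_hom_axioms_def hom_def
  proof (intro conjI CollectI ballI Pi_I)
    show "group C" "group (BijGroup X)" by (fact C, rule group_BijGroup)
    show "restrict (act c) X \<in> carrier (BijGroup X)" if "c \<in> carrier C" for c
      using bij[OF that] by (simp add: BijGroup_def)
    show "restrict (act (c \<otimes>\<^bsub>C\<^esub> d)) X
            = restrict (act c) X \<otimes>\<^bsub>BijGroup X\<^esub> restrict (act d) X"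
      if c: "c \<in> carrier C" and d: "d \<in> carrier C" for c d
      using bij[OF c] bij[OF d] c d mult closed
      by (auto simp: BijGroup_def compose_def fun_eq_iff)
  qed
qed

lemma (in group_action) p_dvd_card_orbit:
  assumes p: "prime p" and order: "order G = p ^ k" and x: "x \<in> E" and nontrivial: "orbit G \<phi> x \<noteq> {x}"
  shows "p dvd card (orbit G \<phi> x)"
proof -
  have "card (orbit G \<phi> x) dvd p ^ k"
    using orbit_stabilizer_theorem[OF x] order by (metis dvd_triv_left)
  then obtain i where i: "card (orbit G \<phi> x) = p ^ i" using p by (auto simp: divides_primepow_nat)
  have "card (orbit G \<phi> x) \<noteq> 1"
    using orbit_refl[OF x] nontrivial by (metis card_1_singletonE singletonD)
  with i have "i \<noteq> 0" by auto
  with i show ?thesis by (simp add: dvd_power)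
qed

text \<open>The non-trivial orbits have \<open>p\<close>-power length, so they vanish modulo \<open>p\<close>.\<close>

lemma card_fixed_points_cong:
  assumes C: "group C" and X: "finite X" and p: "prime p" and order: "order C = p ^ k"
    and closed: "\<And>c x. c \<in> carrier C \<Longrightarrow> x \<in> X \<Longrightarrow> act c x \<in> X"
    and one: "\<And>x. x \<in> X \<Longrightarrow> act \<one>\<^bsub>C\<^esub> x = x"
    and mult: "\<And>c d x. c \<in> carrier C \<Longrightarrow> d \<in> carrier C \<Longrightarrow> x \<in> X \<Longrightarrow>
                 act (c \<otimes>\<^bsub>C\<^esub> d) x = act c (act d x)"
  shows "card X mod p = card {x \<in> X. \<forall>c\<in>carrier C. act c x = x} mod p"
proof -
  define \<phi> where "\<phi> = (\<lambda>c. restrict (act c) X)"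
  define Fix where "Fix = {x \<in> X. \<forall>c\<in>carrier C. act c x = x}"
  interpret A: group_action C X \<phi>
    using group_action_of_action_laws[OF C closed one mult] unfolding \<phi>_def .
  have orbit: "orbit C \<phi> x = {act c x | c. c \<in> carrier C}" if "x \<in> X" for x
    using that by (auto simp: orbit_def \<phi>_def)
  have orbit_Fix: "orbit C \<phi> x = {x}" if "x \<in> Fix" for x
    using that orbit[of x] A.orbit_refl[of x] unfolding Fix_def by auto
  have p_dvd_orbit: "p dvd card (orbit C \<phi> x)" if x: "x \<in> X" "x \<notin> Fix" for x
    using A.p_dvd_card_orbit[OF p order x(1)] orbit[OF x(1)] x unfolding Fix_def by blast
  define f where "f = (\<lambda>x. if x \<in> Fix then 0 else (1::nat))"
  have "p dvd (\<Sum>x\<in>Y. f x)" if Y: "Y \<in> orbits C X \<phi>" for Y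
  proof -
    obtain x where x: "x \<in> X" "Y = orbit C \<phi> x" using Y unfolding orbits_def by blast
    show ?thesis
    proof (cases "x \<in> Fix")
      case True
      then show ?thesis using orbit_Fix x by (simp add: f_def)
    next
      case False
      have "y \<notin> Fix" if "y \<in> Y" for y
      proof
        assume y: "y \<in> Fix"
        then have "x \<in> orbit C \<phi> y" using that x A.orbit_sym[OF x(1)] unfolding Fix_def by blast
        with orbit_Fix[OF y] y False show False by simp
      qed
      then have "(\<Sum>x\<in>Y. f x) = card Y" by (simp add: f_def)
      then show ?thesis using p_dvd_orbit[OF x(1) False] x by simp
    qed
  qed
  then have "p dvd (\<Sum>Y\<in>orbits C X \<phi>. \<Sum>x\<in>Y. f x)" by (rule dvd_sum)
  also have "(\<Sum>Y\<in>orbits C X \<phi>. \<Sum>x\<in>Y. f x) = (\<Sum>x\<in>X. f x)"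
    by (rule A.disjoint_sum[OF X])
  also have "\<dots> = card (X - Fix)"
    using X by (simp add: f_def sum.If_cases Diff_eq Int_commute)
  finally have "p dvd card (X - Fix)" .
  moreover have "card X = card Fix + card (X - Fix)"
    using X card_Diff_subset[of Fix X] card_mono[of X Fix] finite_subset[of Fix X]
    unfolding Fix_def by auto
  ultimately show ?thesis unfolding Fix_def[symmetric] by (auto elim!: dvdE)
qed

lemma (in group) lcoset_fixed_imp_conj_mem:
  assumes H: "subgroup H G" and d: "d \<in> carrier G" and c: "c \<in> carrier G"
    and fixed: "c <# (d <# H) = d <# H"
  shows "inv d \<otimes> c \<otimes> d \<in> H"
proof -
  have HG: "H \<subseteq> carrier G" using H subgroup.subset by blast
  have "c \<otimes> d \<in> d <# H"
    using fixed lcos_self[of "c \<otimes> d" H] lcos_m_assoc[OF HG c d] c d H by simp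
  then obtain h where "h \<in> H" "c \<otimes> d = d \<otimes> h" unfolding l_coset_def by blast
  moreover have "inv d \<otimes> (d \<otimes> h) = h" if "h \<in> H" for h
    using that d HG by (simp add: m_assoc[symmetric] subsetD)
  ultimately show ?thesis using c d by (simp add: m_assoc)
qed

lemma (in group) card_lcosets_fixed_cong:
  assumes fin: "finite (carrier G)" and p: "prime p"
    and H: "subgroup H G" and C: "subgroup C G" and card_C: "card C = p ^ k"
  shows "card (lcosets H) mod p = card {Y \<in> lcosets H. \<forall>c\<in>C. c <# Y = Y} mod p"
proof -
  have HG: "H \<subseteq> carrier G" and CG: "C \<subseteq> carrier G" using H C subgroup.subset by auto
  have lcosets: "Y \<in> lcosets H \<longleftrightarrow> (\<exists>d\<in>carrier G. Y = d <# H)" for Y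
    unfolding LCOSETS_def by blast
  show ?thesis
  proof (rule card_fixed_points_cong[where C = "G\<lparr>carrier := C\<rparr>", simplified])
    show "group (G\<lparr>carrier := C\<rparr>)" using C by (rule subgroup_imp_group)
    show "finite (lcosets H)" using fin by (simp add: LCOSETS_def)
    show "prime p" by fact
    show "order (G\<lparr>carrier := C\<rparr>) = p ^ k" using card_C by (simp add: order_def)
    show "c <# Y \<in> lcosets H" if "c \<in> C" "Y \<in> lcosets H" for c Y
      using that lcosets[of Y] lcosets[of "c <# Y"] CG HG by (auto simp: lcos_m_assoc subsetD)
    show "\<one> <# Y = Y" if "Y \<in> lcosets H" for Y
      using that lcosets[of Y] HG by (auto simp: lcos_m_assoc lcos_mult_one)
    show "(c \<otimes> d) <# Y = c <# (d <# Y)" if "c \<in> C" "d \<in> C" "Y \<in> lcosets H" for c d Y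
      using that lcosets[of Y] CG HG by (auto simp: lcos_m_assoc subsetD m_assoc)
  qed
qed

text \<open>An element of \<open>p\<close>-power order fixes a left coset of a Sylow subgroup, since \<open>p\<close> does
  not divide the number of those cosets.\<close>

lemma (in group) p_element_conj_into_sylow:
  assumes fin: "finite (carrier G)" and p: "prime p"
    and H: "subgroup H G" and card_H: "card H = p ^ multiplicity p (order G)"
    and a: "a \<in> carrier G" and a_pow: "a [^] (p ^ n) = \<one>"
  shows "\<exists>d\<in>carrier G. inv d \<otimes> a \<otimes> d \<in> H"
proof -
  define C where "C = generate G {a}"
  have C: "subgroup C G" unfolding C_def using a by (simp add: generate_is_subgroup)
  have "ord a dvd p ^ n" using pow_eq_id[OF a] a_pow by simp
  then obtain j where "ord a = p ^ j" using p by (auto simp: divides_primepow_nat)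
  then have card_C: "card C = p ^ j" unfolding C_def using generate_pow_card[OF a] by simp
  have lagrange: "card (lcosets H) * card H = order G" using l_lagrange[OF fin H] .
  have "\<not> p dvd card (lcosets H)"
  proof
    assume "p dvd card (lcosets H)"
    then have "p ^ Suc (multiplicity p (order G)) dvd order G"
      using lagrange card_H by (metis mult_dvd_mono dvd_refl power_Suc)
    moreover have "order G \<noteq> 0" using fin order_gt_0_iff_finite by simp
    ultimately show False using p by (metis Suc_n_not_le_n multiplicity_geI not_prime_unit)
  qed
  then have "card {Y \<in> lcosets H. \<forall>c\<in>C. c <# Y = Y} \<noteq> 0"
    using card_lcosets_fixed_cong[OF fin p H C card_C] by (metis mod_0 dvd_eq_mod_eq_0)
  then have "{Y \<in> lcosets H. \<forall>c\<in>C. c <# Y = Y} \<noteq> {}" by (metis card.empty)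
  then obtain Y where "Y \<in> lcosets H" and fixed: "\<forall>c\<in>C. c <# Y = Y" by blast
  then obtain d where d: "d \<in> carrier G" "Y = d <# H" unfolding LCOSETS_def by blast
  have "a \<in> C" unfolding C_def by (simp add: generate.incl)
  then show ?thesis using fixed d lcoset_fixed_imp_conj_mem[OF H d(1) a] by blast
qed

lemma (in group) p_dvd_card_lcosets_fixed:
  assumes fin: "finite (carrier G)" and p: "prime p" and order: "order G = p ^ n"
    and H: "subgroup H G" and proper: "H \<noteq> carrier G"
  shows "p dvd card {Y \<in> lcosets H. \<forall>c\<in>H. c <# Y = Y}"
proof -
  obtain i where i: "card H = p ^ i"
    using lagrange[OF H] order p by (metis dvd_triv_right divides_primepow_nat)
  have "card H < order G"
    using psubset_card_mono[OF fin] subgroup.subset[OF H] proper unfolding order_def by blast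
  then have "i < n" using order i p by (metis nat_power_less_imp_less prime_gt_0_nat)
  have "card (lcosets H) * p ^ i = p ^ n" using l_lagrange[OF fin H] order i by simp
  moreover have "p ^ n = p ^ (n - i) * p ^ i" using \<open>i < n\<close> by (simp flip: power_add)
  ultimately have "card (lcosets H) = p ^ (n - i)" using p by (simp add: prime_gt_0_nat)
  then have "card (lcosets H) mod p = 0" using \<open>i < n\<close> by (simp add: dvd_power)
  then show ?thesis using card_lcosets_fixed_cong[OF fin p H H i] by (simp add: dvd_eq_mod_eq_0)
qed

lemma (in group) fs_conj_image_eq:
  assumes H: "finite H" "H \<subseteq> carrier G" and g: "g \<in> carrier G" and sub: "fs_conj G g ` H \<subseteq> H"
  shows "fs_conj G g ` H = H"
proof -
  have "inj_on (fs_conj G g) H" using g H(2) by (intro inj_onI) (auto simp: fs_conj_def subsetD)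
  then show ?thesis using sub H(1) by (simp add: card_subset_eq card_image)
qed

text \<open>The left cosets of \<open>H\<close> in \<open>P\<close> fixed by \<open>H\<close> are those of \<open>N\<^sub>P(H)\<close>.\<close>

lemma (in group) normalizer_grows:
  assumes fin: "finite (carrier G)" and p: "prime p" and order: "order G = p ^ n"
    and H: "subgroup H G" and P: "subgroup P G" and HP: "H \<subset> P"
  shows "\<exists>g\<in>P - H. fs_conj G g ` H = H"
proof -
  define P' where "P' = G\<lparr>carrier := P\<rparr>"
  interpret P': group P' unfolding P'_def using P by (rule subgroup_imp_group)
  have H': "subgroup H P'" unfolding P'_def using subgroup_incl[OF H P] HP by auto
  have finP: "finite P" using fin P subgroup.subset finite_subset by blast
  have HG: "H \<subseteq> carrier G" and HP': "H \<subseteq> carrier P'" using H H' subgroup.subset by auto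
  obtain m where "card P = p ^ m"
    using lagrange[OF P] order p by (metis dvd_triv_right divides_primepow_nat)
  then have "p dvd card {Y \<in> lcosets\<^bsub>P'\<^esub> H. \<forall>c\<in>H. c <#\<^bsub>P'\<^esub> Y = Y}" (is "p dvd card ?Fix")
    using P'.p_dvd_card_lcosets_fixed[OF _ p _ H'] finP HP unfolding P'_def order_def by auto
  moreover have "H \<in> ?Fix"
  proof -
    have "H = \<one>\<^bsub>P'\<^esub> <#\<^bsub>P'\<^esub> H" using HP' P'.lcos_mult_one by simp
    then have "H \<in> lcosets\<^bsub>P'\<^esub> H" unfolding LCOSETS_def by blast
    moreover have "c <#\<^bsub>P'\<^esub> H = H" if "c \<in> H" for c
      using P'.coset_join3[OF _ H' that] that HP' by blast
    ultimately show ?thesis by blast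
  qed
  moreover have "finite ?Fix" using finP unfolding LCOSETS_def P'_def by simp
  ultimately have "p \<le> card ?Fix" by (auto intro!: dvd_imp_le simp: card_gt_0_iff)
  then have "\<not> ?Fix \<subseteq> {H}" using prime_ge_2_nat[OF p] card_mono[of "{H}" ?Fix] by fastforce
  then obtain g where g: "g \<in> P" "g <#\<^bsub>P'\<^esub> H \<noteq> H"
    and fixed: "\<forall>c\<in>H. c <#\<^bsub>P'\<^esub> (g <#\<^bsub>P'\<^esub> H) = g <#\<^bsub>P'\<^esub> H"
    unfolding LCOSETS_def P'_def by auto
  have g_notin: "g \<notin> H" using g P'.coset_join3[OF _ H'] unfolding P'_def by auto
  have gG: "g \<in> carrier G" using g P subgroup.subset by blast
  have "fs_conj G (inv g) h \<in> H" if h: "h \<in> H" for h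
  proof -
    have "inv\<^bsub>P'\<^esub> g \<otimes>\<^bsub>P'\<^esub> h \<otimes>\<^bsub>P'\<^esub> g \<in> H"
      using P'.lcoset_fixed_imp_conj_mem[OF H' _ _ fixed[rule_format, OF h]] g h HP
      unfolding P'_def by auto
    then show ?thesis using g gG m_inv_consistent[OF P] unfolding P'_def fs_conj_def by simp
  qed
  then have "fs_conj G (inv g) ` H = H"
    using fs_conj_image_eq[OF finite_subset[OF _ finP] HG] HP gG by blast
  moreover have "inv g \<in> P - H"
    using g g_notin H P gG by (metis DiffI inv_inv subgroup.m_inv_closed)
  ultimately show ?thesis by blast
qed

lemma fs_N_carrier: "g \<in> fs_N G X \<Longrightarrow> g \<in> carrier G"
  unfolding fs_N_def by blast

lemma fs_N_conj_mem: "g \<in> fs_N G X \<Longrightarrow> x \<in> X \<Longrightarrow> fs_conj G g x \<in> X"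
  unfolding fs_N_def by blast

lemma fs_C_antimono: "X \<subseteq> Y \<Longrightarrow> fs_C G Y \<subseteq> fs_C G X"
  unfolding fs_C_def by blast
context group
begin

lemma fs_conj_conj:
  "g \<in> carrier G \<Longrightarrow> h \<in> carrier G \<Longrightarrow> x \<in> carrier G \<Longrightarrow>
   fs_conj G g (fs_conj G h x) = fs_conj G (g \<otimes> h) x"
  by (simp add: fs_conj_def m_assoc inv_mult_group)

lemma fs_conj_one: "x \<in> carrier G \<Longrightarrow> fs_conj G \<one> x = x"
  by (simp add: fs_conj_def)

lemma fs_conj_inv_conj: "g \<in> carrier G \<Longrightarrow> x \<in> carrier G \<Longrightarrow> fs_conj G (inv g) (fs_conj G g x) = x"
  by (simp add: fs_conj_conj fs_conj_one)

lemma fs_conj_conj_inv: "g \<in> carrier G \<Longrightarrow> x \<in> carrier G \<Longrightarrow> fs_conj G g (fs_conj G (inv g) x) = x"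
  by (simp add: fs_conj_conj fs_conj_one)

lemma fs_conj_eq_self_iff:
  "g \<in> carrier G \<Longrightarrow> x \<in> carrier G \<Longrightarrow> fs_conj G g x = x \<longleftrightarrow> g \<otimes> x = x \<otimes> g"
  unfolding fs_conj_def by (metis inv_closed m_closed inv_solve_right')

lemma fs_conj_eq_imp_fs_C:
  assumes X: "X \<subseteq> carrier G" and g: "g \<in> carrier G" and h: "h \<in> carrier G"
    and eq: "\<And>x. x \<in> X \<Longrightarrow> fs_conj G g x = fs_conj G h x"
  shows "inv h \<otimes> g \<in> fs_C G X"
  unfolding fs_C_def
proof (intro CollectI conjI ballI)
  show "inv h \<otimes> g \<in> carrier G" using g h by simp
  fix x assume x: "x \<in> X"
  then have "fs_conj G (inv h \<otimes> g) x = x"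
    using eq[OF x] X g h fs_conj_conj[of "inv h" g x] fs_conj_inv_conj[of h x] by (auto simp: subsetD)
  then show "inv h \<otimes> g \<otimes> x = x \<otimes> (inv h \<otimes> g)"
    using fs_conj_eq_self_iff[of "inv h \<otimes> g" x] x X g h by (auto simp: subsetD)
qed

lemma fs_conj_mem_subgroup: "subgroup P G \<Longrightarrow> z \<in> P \<Longrightarrow> x \<in> P \<Longrightarrow> fs_conj G z x \<in> P"
  unfolding fs_conj_def by (simp add: subgroup.m_closed subgroup.m_inv_closed)

lemma fs_conj_image_subgroup:
  assumes P: "subgroup P G" and x: "x \<in> P"
  shows "fs_conj G x ` P = P"
proof
  show "fs_conj G x ` P \<subseteq> P" using fs_conj_mem_subgroup[OF P x] by blast
  have "y = fs_conj G x (fs_conj G (inv x) y)" if "y \<in> P" for y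
    using that x fs_conj_conj_inv subgroup.mem_carrier[OF P] by metis
  moreover have "fs_conj G (inv x) y \<in> P" if "y \<in> P" for y
    using that x P by (simp add: fs_conj_mem_subgroup subgroup.m_inv_closed)
  ultimately show "P \<subseteq> fs_conj G x ` P" by blast
qed

lemma fs_conj_image_mult:
  "X \<subseteq> carrier G \<Longrightarrow> g \<in> carrier G \<Longrightarrow> h \<in> carrier G \<Longrightarrow>
   fs_conj G (g \<otimes> h) ` X = fs_conj G g ` fs_conj G h ` X"
  by (auto simp: image_iff fs_conj_conj subsetD)

lemma one_mem_fs_N: "X \<subseteq> carrier G \<Longrightarrow> \<one> \<in> fs_N G X"
  unfolding fs_N_def by (force simp: fs_conj_one subsetD)

lemma fs_N_m_closed:
  "X \<subseteq> carrier G \<Longrightarrow> g \<in> fs_N G X \<Longrightarrow> h \<in> fs_N G X \<Longrightarrow> g \<otimes> h \<in> fs_N G X"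
  unfolding fs_N_def by (simp add: fs_conj_image_mult)

lemma fs_N_inv_closed:
  assumes X: "X \<subseteq> carrier G" and g: "g \<in> fs_N G X"
  shows "inv g \<in> fs_N G X"
proof -
  have "fs_conj G (inv g) ` X = fs_conj G (inv g \<otimes> g) ` X"
    using g fs_conj_image_mult[OF X, of "inv g" g] unfolding fs_N_def by simp
  then show ?thesis using one_mem_fs_N[OF X] g unfolding fs_N_def by simp
qed

lemma subgroup_Int_fs_N:
  assumes P: "subgroup P G" and X: "X \<subseteq> carrier G"
  shows "subgroup (P \<inter> fs_N G X) G"
proof (rule subgroupI)
  show "P \<inter> fs_N G X \<subseteq> carrier G" using P subgroup.subset by blast
  show "P \<inter> fs_N G X \<noteq> {}" using one_mem_fs_N[OF X] subgroup.one_closed[OF P] by blast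
qed (use P X in \<open>auto simp: subgroup.m_closed subgroup.m_inv_closed fs_N_m_closed fs_N_inv_closed\<close>)
lemma fs_conj_carrier_update:
  assumes T: "subgroup T G" and g: "g \<in> T"
  shows "fs_conj (G\<lparr>carrier := T\<rparr>) g = fs_conj G g"
  unfolding fs_conj_def using m_inv_consistent[OF T g] by simp

lemma fs_C_carrier_update:
  assumes T: "subgroup T G"
  shows "fs_C (G\<lparr>carrier := T\<rparr>) X = fs_C G X \<inter> T"
  unfolding fs_C_def using subgroup.subset[OF T] by auto

lemma fs_N_carrier_update:
  assumes T: "subgroup T G"
  shows "fs_N (G\<lparr>carrier := T\<rparr>) X = {g \<in> T. fs_conj G g ` X = X}"
  unfolding fs_N_def by (auto simp: fs_conj_carrier_update[OF T])

lemma subgroup_carrier_update_iff: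
  assumes T: "subgroup T G"
  shows "subgroup P (G\<lparr>carrier := T\<rparr>) \<longleftrightarrow> subgroup P G \<and> P \<subseteq> T"
proof
  assume P: "subgroup P (G\<lparr>carrier := T\<rparr>)"
  show "subgroup P G \<and> P \<subseteq> T"
  proof
    show "subgroup P G" using incl_subgroup[OF T P] .
    show "P \<subseteq> T" using subgroup.subset[OF P] by simp
  qed
next
  assume "subgroup P G \<and> P \<subseteq> T"
  then show "subgroup P (G\<lparr>carrier := T\<rparr>)" using subgroup_incl[OF _ T] by blast
qed
text \<open>Take \<open>P\<^sub>0\<close> of maximal order with \<open>Q \<le> P\<^sub>0 < P\<close>; since normalizers grow,
  \<open>N\<^sub>P(P\<^sub>0) = P\<close>.\<close>

lemma exists_normal_between:
  assumes fin: "finite (carrier G)" and p: "prime p" and order: "order G = p ^ n"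
    and Q: "subgroup Q G" and P: "subgroup P G" and QP: "Q \<subset> P"
  shows "\<exists>P0. subgroup P0 G \<and> Q \<subseteq> P0 \<and> P0 \<subset> P \<and> (\<forall>x\<in>P. fs_conj G x ` P0 = P0)"
proof -
  define \<P> where "\<P> = {P0. subgroup P0 G \<and> Q \<subseteq> P0 \<and> P0 \<subset> P}"
  have "\<P> \<subseteq> Pow (carrier G)" unfolding \<P>_def using subgroup.subset by blast
  then have "finite (card ` \<P>)" using fin by (simp add: finite_subset)
  moreover have "Q \<in> \<P>" unfolding \<P>_def using Q QP by blast
  moreover define m where "m = Max (card ` \<P>)"
  ultimately have "m \<in> card ` \<P>" and max: "\<And>P1. P1 \<in> \<P> \<Longrightarrow> card P1 \<le> m"
    by (auto intro!: Max_in)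
  then obtain P0 where P0: "subgroup P0 G" "Q \<subseteq> P0" "P0 \<subset> P" and card_P0: "card P0 = m"
    unfolding \<P>_def by auto
  have P0G: "P0 \<subseteq> carrier G" using P0(1) subgroup.subset by blast
  define N where "N = P \<inter> fs_N G P0"
  have N: "subgroup N G" unfolding N_def using subgroup_Int_fs_N[OF P P0G] .
  have "P0 \<subseteq> N"
    unfolding N_def fs_N_def using P0 fs_conj_image_subgroup[OF P0(1)] P0G by auto
  moreover obtain g where "g \<in> P - P0" "fs_conj G g ` P0 = P0"
    using normalizer_grows[OF fin p order P0(1) P P0(3)] by blast
  ultimately have "P0 \<subset> N" unfolding N_def fs_N_def using subgroup.mem_carrier[OF P] by blast
  then have "card P0 < card N" using finite_subset[OF subgroup.subset[OF N] fin] by (rule psubset_card_mono[rotated])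
  then have "N \<notin> \<P>" using max card_P0 by fastforce
  then have "N = P" unfolding \<P>_def N_def using N P0 \<open>P0 \<subset> N\<close> N_def by blast
  then show ?thesis using P0 unfolding N_def fs_N_def by blast
qed
end


lemma inj_hom_mono: "R \<subseteq> R' \<Longrightarrow> inj_hom G P R \<subseteq> inj_hom G P R'"
  unfolding inj_hom_def by blast
lemma N_phi_iff:
  assumes inj: "inj_on \<beta> Q"
  shows "g \<in> N_phi G Q \<beta> \<longleftrightarrow> g \<in> fs_N G Q \<and>
     (\<exists>h\<in>fs_N G (\<beta> ` Q). \<forall>y\<in>Q. \<beta> (fs_conj G g y) = fs_conj G h (\<beta> y))"
proof -
  have "restrict (\<beta> \<circ> fs_conj G g \<circ> inv_into Q \<beta>) (\<beta> ` Q) = restrict (fs_conj G h) (\<beta> ` Q)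
     \<longleftrightarrow> (\<forall>y\<in>Q. \<beta> (fs_conj G g y) = fs_conj G h (\<beta> y))" for h
    using inj by (auto simp: fun_eq_iff restrict_def)
  then show ?thesis unfolding N_phi_def AutS_def by blast
qed

lemma inj_homD:
  assumes "\<phi> \<in> inj_hom G P R"
  shows "\<phi> \<in> extensional P" "\<phi> ` P \<subseteq> R" "inj_on \<phi> P"
    "\<And>x y. x \<in> P \<Longrightarrow> y \<in> P \<Longrightarrow> \<phi> (x \<otimes>\<^bsub>G\<^esub> y) = \<phi> x \<otimes>\<^bsub>G\<^esub> \<phi> y"
  using assms unfolding inj_hom_def by auto

lemma inj_hom_carrier_update [simp]: "inj_hom (G\<lparr>carrier := T\<rparr>) P R = inj_hom G P R"
  by (simp add: inj_hom_def)
context group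
begin

lemma inj_hom_one:
  assumes P: "subgroup P G" and \<phi>: "\<phi> \<in> inj_hom G P (carrier G)"
  shows "\<phi> \<one> = \<one>"
proof -
  have one: "\<one> \<in> P" using P by (rule subgroup.one_closed)
  then have "\<phi> \<one> \<otimes> \<phi> \<one> = \<phi> \<one>" using inj_homD(4)[OF \<phi> one one] by simp
  moreover have "\<phi> \<one> \<in> carrier G" using inj_homD(2)[OF \<phi>] one by blast
  ultimately show ?thesis by (simp add: l_cancel_one')
qed

lemma inj_hom_inv:
  assumes P: "subgroup P G" and \<phi>: "\<phi> \<in> inj_hom G P (carrier G)" and x: "x \<in> P"
  shows "\<phi> (inv x) = inv (\<phi> x)"
proof -
  have ix: "inv x \<in> P" using P x by (rule subgroup.m_inv_closed)
  have "\<phi> (inv x) \<otimes> \<phi> x = \<one>"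
    using inj_homD(4)[OF \<phi> ix x] inj_hom_one[OF P \<phi>] subgroup.mem_carrier[OF P x] by simp
  moreover have "\<phi> x \<in> carrier G" "\<phi> (inv x) \<in> carrier G" using inj_homD(2)[OF \<phi>] x ix by auto
  ultimately show ?thesis by (simp add: inv_equality)
qed

lemma inj_hom_image_subgroup:
  assumes P: "subgroup P G" and \<phi>: "\<phi> \<in> inj_hom G P (carrier G)"
  shows "subgroup (\<phi> ` P) G"
proof (rule subgroupI)
  show "\<phi> ` P \<subseteq> carrier G" by (rule inj_homD(2)[OF \<phi>])
  show "\<phi> ` P \<noteq> {}" using subgroup.one_closed[OF P] by blast
  show "inv a \<in> \<phi> ` P" if "a \<in> \<phi> ` P" for a
  proof -
    obtain x where "x \<in> P" "a = \<phi> x" using \<open>a \<in> \<phi> ` P\<close> by blast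
    then have "inv a = \<phi> (inv x)" "inv x \<in> P"
      using inj_hom_inv[OF P \<phi>] subgroup.m_inv_closed[OF P] by auto
    then show ?thesis by blast
  qed
  show "a \<otimes> b \<in> \<phi> ` P" if "a \<in> \<phi> ` P" and "b \<in> \<phi> ` P" for a b
  proof -
    obtain x y where "x \<in> P" "y \<in> P" "a = \<phi> x" "b = \<phi> y"
      using \<open>a \<in> \<phi> ` P\<close> \<open>b \<in> \<phi> ` P\<close> by blast
    then have "a \<otimes> b = \<phi> (x \<otimes> y)" "x \<otimes> y \<in> P"
      using inj_homD(4)[OF \<phi>] subgroup.m_closed[OF P] by auto
    then show ?thesis by blast
  qed
qed

lemma inj_hom_fs_conj:
  assumes P: "subgroup P G" and \<phi>: "\<phi> \<in> inj_hom G P (carrier G)" and g: "g \<in> P" and x: "x \<in> P"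
  shows "\<phi> (fs_conj G g x) = fs_conj G (\<phi> g) (\<phi> x)"
  using inj_homD(4)[OF \<phi>, of "g \<otimes> x" "inv g"] inj_homD(4)[OF \<phi> g x] inj_hom_inv[OF P \<phi> g] g x P
  by (simp add: fs_conj_def subgroup.m_closed subgroup.m_inv_closed)

context
  fixes Q \<beta> assumes Q: "subgroup Q G" and \<beta>: "\<beta> \<in> inj_hom G Q (carrier G)"
begin

lemma one_mem_N_phi: "\<one> \<in> N_phi G Q \<beta>"
proof -
  have QG: "Q \<subseteq> carrier G" and BG: "\<beta> ` Q \<subseteq> carrier G"
    using subgroup.subset[OF Q] inj_homD(2)[OF \<beta>] by auto
  then have "\<beta> (fs_conj G \<one> y) = fs_conj G \<one> (\<beta> y)" if "y \<in> Q" for y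
    using that by (auto simp: fs_conj_one subsetD)
  then show ?thesis
    unfolding N_phi_iff[OF inj_homD(3)[OF \<beta>]] using one_mem_fs_N[OF QG] one_mem_fs_N[OF BG] by blast
qed

lemma N_phi_inv_closed:
  assumes "g \<in> N_phi G Q \<beta>"
  shows "inv g \<in> N_phi G Q \<beta>"
proof -
  have QG: "Q \<subseteq> carrier G" and BG: "\<beta> ` Q \<subseteq> carrier G"
    using subgroup.subset[OF Q] inj_homD(2)[OF \<beta>] by auto
  obtain h where g: "g \<in> fs_N G Q" and h: "h \<in> fs_N G (\<beta> ` Q)"
    and eq: "\<forall>y\<in>Q. \<beta> (fs_conj G g y) = fs_conj G h (\<beta> y)"
    using assms unfolding N_phi_iff[OF inj_homD(3)[OF \<beta>]] by blast
  have "\<beta> (fs_conj G (inv g) y) = fs_conj G (inv h) (\<beta> y)" if y: "y \<in> Q" for y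
  proof -
    have y': "fs_conj G (inv g) y \<in> Q" using fs_N_conj_mem[OF fs_N_inv_closed[OF QG g] y] .
    have "\<beta> y = fs_conj G h (\<beta> (fs_conj G (inv g) y))"
      using eq y' fs_conj_conj_inv[of g y] fs_N_carrier[OF g] y QG by (metis subsetD)
    then show ?thesis using fs_conj_inv_conj fs_N_carrier[OF h] BG y' by (metis image_subset_iff)
  qed
  then show ?thesis
    unfolding N_phi_iff[OF inj_homD(3)[OF \<beta>]] using fs_N_inv_closed[OF QG g] fs_N_inv_closed[OF BG h]
    by blast
qed

lemma N_phi_m_closed:
  assumes "g1 \<in> N_phi G Q \<beta>" "g2 \<in> N_phi G Q \<beta>"
  shows "g1 \<otimes> g2 \<in> N_phi G Q \<beta>"
proof -
  have QG: "Q \<subseteq> carrier G" and BG: "\<beta> ` Q \<subseteq> carrier G"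
    using subgroup.subset[OF Q] inj_homD(2)[OF \<beta>] by auto
  obtain h1 h2 where g: "g1 \<in> fs_N G Q" "g2 \<in> fs_N G Q"
    and h: "h1 \<in> fs_N G (\<beta> ` Q)" "h2 \<in> fs_N G (\<beta> ` Q)"
    and eq1: "\<forall>y\<in>Q. \<beta> (fs_conj G g1 y) = fs_conj G h1 (\<beta> y)"
    and eq2: "\<forall>y\<in>Q. \<beta> (fs_conj G g2 y) = fs_conj G h2 (\<beta> y)"
    using assms unfolding N_phi_iff[OF inj_homD(3)[OF \<beta>]] by blast
  have "\<beta> (fs_conj G (g1 \<otimes> g2) y) = fs_conj G (h1 \<otimes> h2) (\<beta> y)" if y: "y \<in> Q" for y
  proof -
    have "\<beta> (fs_conj G (g1 \<otimes> g2) y) = \<beta> (fs_conj G g1 (fs_conj G g2 y))"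
      using fs_conj_conj fs_N_carrier[OF g(1)] fs_N_carrier[OF g(2)] y QG by (auto simp: subsetD)
    also have "\<dots> = fs_conj G h1 (fs_conj G h2 (\<beta> y))" using eq1 eq2 fs_N_conj_mem[OF g(2) y] y by simp
    also have "\<dots> = fs_conj G (h1 \<otimes> h2) (\<beta> y)"
      using fs_conj_conj fs_N_carrier[OF h(1)] fs_N_carrier[OF h(2)] y BG by (auto simp: subsetD)
    finally show ?thesis .
  qed
  then show ?thesis
    unfolding N_phi_iff[OF inj_homD(3)[OF \<beta>]] using fs_N_m_closed[OF QG g] fs_N_m_closed[OF BG h]
    by blast
qed

lemma N_phi_subgroup: "subgroup (N_phi G Q \<beta>) G"
  by (rule subgroupI)
    (use one_mem_N_phi N_phi_inv_closed N_phi_m_closed in \<open>auto simp: N_phi_def fs_N_def\<close>)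

end

lemma inj_hom_image_normal:
  assumes P: "subgroup P G" and \<phi>: "\<phi> \<in> inj_hom G P (carrier G)"
    and P0P: "P0 \<subseteq> P" and normal: "\<And>x. x \<in> P \<Longrightarrow> fs_conj G x ` P0 = P0" and x: "x \<in> P"
  shows "fs_conj G (\<phi> x) ` \<phi> ` P0 = \<phi> ` P0"
proof -
  have "fs_conj G (\<phi> x) ` \<phi> ` P0 = \<phi> ` fs_conj G x ` P0"
    using inj_hom_fs_conj[OF P \<phi> x] P0P by (auto simp: image_iff subsetD)
  then show ?thesis using normal[OF x] by simp
qed

lemma subgroup_subset_N_phi:
  assumes P: "subgroup P G" and \<phi>: "\<phi> \<in> inj_hom G P (carrier G)"
    and P0P: "P0 \<subseteq> P" and normal: "\<And>x. x \<in> P \<Longrightarrow> fs_conj G x ` P0 = P0"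
  shows "P \<subseteq> N_phi G P0 (restrict \<phi> P0)"
proof
  fix g assume g: "g \<in> P"
  have "\<phi> g \<in> fs_N G (restrict \<phi> P0 ` P0)"
    using inj_hom_image_normal[OF P \<phi> P0P normal g] inj_homD(2)[OF \<phi>] g unfolding fs_N_def by auto
  moreover have "g \<in> fs_N G P0" using normal[OF g] subgroup.mem_carrier[OF P g] unfolding fs_N_def by simp
  moreover have "restrict \<phi> P0 (fs_conj G g y) = fs_conj G (\<phi> g) (restrict \<phi> P0 y)" if "y \<in> P0" for y
    using inj_hom_fs_conj[OF P \<phi> g] normal[OF g] that P0P by auto
  moreover have inj: "inj_on (restrict \<phi> P0) P0"
    using inj_on_subset[OF inj_homD(3)[OF \<phi>] P0P] by (simp add: inj_on_def)
  ultimately show "g \<in> N_phi G P0 (restrict \<phi> P0)" unfolding N_phi_iff[OF inj] by blast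
qed

text \<open>If \<open>\<phi>\<close> and \<open>\<psi>\<close> agree on \<open>P\<^sub>0 \<unlhd> P\<close>, then \<open>\<psi>(x)\<^sup>-\<^sup>1\<phi>(x)\<close> centralizes \<open>\<phi>(P\<^sub>0)\<close>,
  hence lies in \<open>\<phi>(P\<^sub>0) = \<psi>(P\<^sub>0)\<close> when the latter is self-centralizing.\<close>

lemma inj_hom_images_eq:
  assumes P: "subgroup P G" and fin: "finite P"
    and \<phi>: "\<phi> \<in> inj_hom G P (carrier G)" and \<psi>: "\<psi> \<in> inj_hom G P (carrier G)"
    and P0P: "P0 \<subseteq> P" and normal: "\<And>x. x \<in> P \<Longrightarrow> fs_conj G x ` P0 = P0"
    and agree: "\<And>y. y \<in> P0 \<Longrightarrow> \<psi> y = \<phi> y"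
    and self_centralizing: "fs_C G (\<phi> ` P0) \<subseteq> \<phi> ` P0"
  shows "\<phi> ` P = \<psi> ` P"
proof -
  have \<phi>G: "\<phi> x \<in> carrier G" and \<psi>G: "\<psi> x \<in> carrier G" if "x \<in> P" for x
    using that inj_homD(2)[OF \<phi>] inj_homD(2)[OF \<psi>] by auto
  have "\<phi> x \<in> \<psi> ` P" if x: "x \<in> P" for x
  proof -
    have "fs_conj G (\<phi> x) (\<phi> y) = fs_conj G (\<psi> x) (\<phi> y)" if y: "y \<in> P0" for y
    proof -
      have yP: "y \<in> P" and "fs_conj G x y \<in> P0" using y P0P normal[OF x] by auto
      then show ?thesis
        using inj_hom_fs_conj[OF P \<phi> x yP] inj_hom_fs_conj[OF P \<psi> x yP] agree y by simp
    qed
    then have "inv (\<psi> x) \<otimes> \<phi> x \<in> \<phi> ` P0"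
      using fs_conj_eq_imp_fs_C[of "\<phi> ` P0" "\<phi> x" "\<psi> x"] self_centralizing \<phi>G \<psi>G x P0P
      by blast
    then obtain y where y: "y \<in> P0" "inv (\<psi> x) \<otimes> \<phi> x = \<psi> y" using agree by force
    have "\<phi> x = \<psi> x \<otimes> (inv (\<psi> x) \<otimes> \<phi> x)" using \<phi>G[OF x] \<psi>G[OF x] by (simp add: m_assoc[symmetric])
    also have "\<dots> = \<psi> (x \<otimes> y)" using y inj_homD(4)[OF \<psi> x] P0P by auto
    finally show ?thesis using subgroup.m_closed[OF P x] y P0P by blast
  qed
  then have "\<phi> ` P \<subseteq> \<psi> ` P" by blast
  moreover have "card (\<phi> ` P) = card (\<psi> ` P)"
    using card_image[OF inj_homD(3)[OF \<phi>]] card_image[OF inj_homD(3)[OF \<psi>]] by simp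
  ultimately show ?thesis using fin by (simp add: card_subset_eq)
qed

lemma inj_hom_fixing_normal_displacement:
  assumes P: "subgroup P G" and \<psi>: "\<psi> \<in> inj_hom G P (carrier G)"
    and P0P: "P0 \<subseteq> P" and normal: "\<And>x. x \<in> P \<Longrightarrow> fs_conj G x ` P0 = P0"
    and trivial: "\<And>y. y \<in> P0 \<Longrightarrow> \<psi> y = y" and x: "x \<in> P"
  shows "inv x \<otimes> \<psi> x \<in> fs_C G P0"
proof (rule fs_conj_eq_imp_fs_C)
  show "P0 \<subseteq> carrier G" "x \<in> carrier G" "\<psi> x \<in> carrier G"
    using P0P x subgroup.subset[OF P] inj_homD(2)[OF \<psi>] by auto
  fix y assume y: "y \<in> P0"
  have "fs_conj G x y \<in> P0" using normal[OF x] y by blast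
  then show "fs_conj G (\<psi> x) y = fs_conj G x y"
    using inj_hom_fs_conj[OF P \<psi> x, of y] trivial y P0P by auto
qed
lemma card_center_le:
  assumes R: "subgroup R G" and fin: "finite R'"
    and \<theta>: "\<theta> \<in> inj_hom G R (carrier G)" and onto: "\<theta> ` R = R'"
  shows "card (R \<inter> fs_C G R) \<le> card (R' \<inter> fs_C G R')"
proof (rule card_inj_on_le)
  show "inj_on \<theta> (R \<inter> fs_C G R)" using inj_homD(3)[OF \<theta>] by (rule inj_on_subset) blast
  show "finite (R' \<inter> fs_C G R')" using fin by simp
  show "\<theta> ` (R \<inter> fs_C G R) \<subseteq> R' \<inter> fs_C G R'"
  proof
    fix v assume "v \<in> \<theta> ` (R \<inter> fs_C G R)"
    then obtain u where u: "u \<in> R" "u \<in> fs_C G R" "v = \<theta> u" by blast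
    have "v \<otimes> r = r \<otimes> v" if "r \<in> R'" for r
    proof -
      obtain r' where r': "r' \<in> R" "r = \<theta> r'" using \<open>r \<in> R'\<close> onto by blast
      then have "u \<otimes> r' = r' \<otimes> u" using u(2) unfolding fs_C_def by blast
      then show ?thesis using inj_homD(4)[OF \<theta>] u(1,3) r' by metis
    qed
    moreover have "v \<in> R'" "v \<in> carrier G" using u onto inj_homD(2)[OF \<theta>] by auto
    ultimately show "v \<in> R' \<inter> fs_C G R'" unfolding fs_C_def by blast
  qed
qed
end

section \<open>Fusion systems\<close>

locale fusion =
  fixes S (structure) and Hom :: "'a set \<Rightarrow> 'a set \<Rightarrow> ('a \<Rightarrow> 'a) set"
  assumes group_S: "group S" and finite_carrier: "finite (carrier S)"
    and fusion_system: "fusion_system S Hom"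
begin

sublocale group S by (rule group_S)

lemma finite_subgroup: "subgroup P S \<Longrightarrow> finite P"
  using finite_carrier subgroup.subset finite_subset by blast

lemmas fusion_system_conjuncts = fusion_system[unfolded fusion_system_def]

lemma hom_inj_hom: "subgroup P S \<Longrightarrow> subgroup R S \<Longrightarrow> \<phi> \<in> Hom P R \<Longrightarrow> \<phi> \<in> inj_hom S P R"
  using conjunct1[OF fusion_system_conjuncts] by blast

lemma hom_inj_hom_carrier:
  "subgroup P S \<Longrightarrow> subgroup R S \<Longrightarrow> \<phi> \<in> Hom P R \<Longrightarrow> \<phi> \<in> inj_hom S P (carrier S)"
  using hom_inj_hom inj_hom_mono[OF subgroup.subset] by blast

lemma hom_image_subset: "subgroup P S \<Longrightarrow> subgroup R S \<Longrightarrow> \<phi> \<in> Hom P R \<Longrightarrow> \<phi> ` P \<subseteq> R"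
  using inj_homD(2)[OF hom_inj_hom] .

lemma hom_inj_on: "subgroup P S \<Longrightarrow> subgroup R S \<Longrightarrow> \<phi> \<in> Hom P R \<Longrightarrow> inj_on \<phi> P"
  using inj_homD(3)[OF hom_inj_hom] .

lemma hom_fs_conj:
  "subgroup P S \<Longrightarrow> subgroup R S \<Longrightarrow> \<phi> \<in> Hom P R \<Longrightarrow> g \<in> P \<Longrightarrow> x \<in> P \<Longrightarrow>
   \<phi> (fs_conj S g x) = fs_conj S (\<phi> g) (\<phi> x)"
  using inj_hom_fs_conj hom_inj_hom_carrier by blast

lemma hom_comp:
  "subgroup P S \<Longrightarrow> subgroup Q S \<Longrightarrow> subgroup R S \<Longrightarrow> \<phi> \<in> Hom P Q \<Longrightarrow> \<psi> \<in> Hom Q R \<Longrightarrow>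
   restrict (\<psi> \<circ> \<phi>) P \<in> Hom P R"
  using conjunct1[OF conjunct2[OF fusion_system_conjuncts]] by blast

lemma hom_conj:
  "subgroup P S \<Longrightarrow> subgroup R S \<Longrightarrow> g \<in> carrier S \<Longrightarrow> fs_conj S g ` P \<subseteq> R \<Longrightarrow>
   restrict (fs_conj S g) P \<in> Hom P R"
  using conjunct1[OF conjunct2[OF conjunct2[OF fusion_system_conjuncts]]] by blast

lemma hom_factorization:
  "subgroup P S \<Longrightarrow> subgroup R S \<Longrightarrow> \<phi> \<in> Hom P R \<Longrightarrow>
   \<phi> \<in> Hom P (\<phi> ` P) \<and> restrict (inv_into P \<phi>) (\<phi> ` P) \<in> Hom (\<phi> ` P) P"
  using conjunct2[OF conjunct2[OF conjunct2[OF fusion_system_conjuncts]]] by blast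

lemma hom_onto_image: "subgroup P S \<Longrightarrow> subgroup R S \<Longrightarrow> \<phi> \<in> Hom P R \<Longrightarrow> \<phi> \<in> Hom P (\<phi> ` P)"
  using hom_factorization by blast

lemma hom_image_subgroup: "subgroup P S \<Longrightarrow> subgroup R S \<Longrightarrow> \<phi> \<in> Hom P R \<Longrightarrow> subgroup (\<phi> ` P) S"
  using inj_hom_image_subgroup hom_inj_hom_carrier by blast

lemma hom_inv:
  assumes P: "subgroup P S" and R: "subgroup R S" and \<phi>: "\<phi> \<in> Hom P R"
  defines "\<psi> \<equiv> restrict (inv_into P \<phi>) (\<phi> ` P)"
  shows "\<psi> \<in> Hom (\<phi> ` P) P" and "\<And>x. x \<in> P \<Longrightarrow> \<psi> (\<phi> x) = x"
    and "\<And>y. y \<in> \<phi> ` P \<Longrightarrow> \<phi> (\<psi> y) = y" and "\<psi> ` \<phi> ` P = P"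
proof -
  show "\<psi> \<in> Hom (\<phi> ` P) P" using hom_factorization[OF P R \<phi>] unfolding \<psi>_def by blast
  have "inj_on \<phi> P" by (rule hom_inj_on[OF P R \<phi>])
  then show "\<And>x. x \<in> P \<Longrightarrow> \<psi> (\<phi> x) = x" "\<psi> ` \<phi> ` P = P" unfolding \<psi>_def by force+
  show "\<And>y. y \<in> \<phi> ` P \<Longrightarrow> \<phi> (\<psi> y) = y" unfolding \<psi>_def by (simp add: f_inv_into_f)
qed

lemma hom_id:
  assumes P: "subgroup P S" and R: "subgroup R S" and PR: "P \<subseteq> R"
  shows "restrict (\<lambda>x. x) P \<in> Hom P R"
proof -
  have "restrict (fs_conj S \<one>) P = restrict (\<lambda>x. x) P"
    using subgroup.mem_carrier[OF P] by (auto simp: fs_conj_one)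
  moreover have "fs_conj S \<one> ` P \<subseteq> R" using PR subgroup.mem_carrier[OF P] by (auto simp: fs_conj_one)
  ultimately show ?thesis using hom_conj[OF P R one_closed] by simp
qed

lemma hom_restrict:
  assumes P: "subgroup P S" and R: "subgroup R S" and \<phi>: "\<phi> \<in> Hom P R"
    and P': "subgroup P' S" "P' \<subseteq> P" and R': "subgroup R' S" "\<phi> ` P' \<subseteq> R'"
  shows "restrict \<phi> P' \<in> Hom P' R'"
proof -
  have "restrict (\<phi> \<circ> restrict (\<lambda>x. x) P') P' \<in> Hom P' R"
    using hom_comp[OF P'(1) P R hom_id[OF P'(1) P P'(2)] \<phi>] .
  then have \<phi>': "restrict \<phi> P' \<in> Hom P' R" by (simp add: restrict_def comp_def cong: if_cong)
  have image: "restrict \<phi> P' ` P' = \<phi> ` P'" by auto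
  then have "subgroup (\<phi> ` P') S" using hom_image_subgroup[OF P'(1) R \<phi>'] by simp
  from hom_comp[OF P'(1) this R'(1) hom_onto_image[OF P'(1) R \<phi>', unfolded image] hom_id[OF this R'(1) R'(2)]]
  show ?thesis by (simp add: restrict_def comp_def cong: if_cong)
qed

lemma hom_retarget:
  assumes P: "subgroup P S" and R: "subgroup R S" and \<phi>: "\<phi> \<in> Hom P R"
    and R': "subgroup R' S" "\<phi> ` P \<subseteq> R'"
  shows "\<phi> \<in> Hom P R'"
  using hom_restrict[OF P R \<phi> P order_refl R'] inj_homD(1)[OF hom_inj_hom[OF P R \<phi>]]
  by (simp add: extensional_restrict)

lemma hom_factor_same_image:
  assumes P: "subgroup P S" and R: "subgroup R S" and \<phi>: "\<phi> \<in> Hom P R" and \<psi>: "\<psi> \<in> Hom P R"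
    and image: "\<phi> ` P = \<psi> ` P"
  shows "\<exists>\<gamma>\<in>Hom P P. \<forall>x\<in>P. \<phi> x = \<psi> (\<gamma> x)"
proof -
  define \<kappa> where "\<kappa> = restrict (inv_into P \<psi>) (\<psi> ` P)"
  have \<psi>P: "subgroup (\<psi> ` P) S" by (rule hom_image_subgroup[OF P R \<psi>])
  have "\<phi> \<in> Hom P (\<psi> ` P)" using hom_retarget[OF P R \<phi> \<psi>P] image by blast
  then have "restrict (\<kappa> \<circ> \<phi>) P \<in> Hom P P"
    using hom_comp[OF P \<psi>P P] hom_inv(1)[OF P R \<psi>] unfolding \<kappa>_def by blast
  moreover have "\<phi> x = \<psi> (restrict (\<kappa> \<circ> \<phi>) P x)" if "x \<in> P" for x
    using hom_inv(3)[OF P R \<psi>, of "\<phi> x"] that image unfolding \<kappa>_def by auto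
  ultimately show ?thesis by blast
qed

lemma aut_transport:
  assumes P: "subgroup P S" and R: "subgroup R S" and \<chi>: "\<chi> \<in> Hom P R" and \<psi>: "\<psi> \<in> Hom P P"
  shows "\<exists>\<psi>'\<in>Hom (\<chi> ` P) (\<chi> ` P). \<forall>x\<in>P. \<psi>' (\<chi> x) = \<chi> (\<psi> x)"
proof -
  define \<kappa> where "\<kappa> = restrict (inv_into P \<chi>) (\<chi> ` P)"
  have P': "subgroup (\<chi> ` P) S" by (rule hom_image_subgroup[OF P R \<chi>])
  have \<kappa>: "\<kappa> \<in> Hom (\<chi> ` P) P" and \<kappa>\<chi>: "\<And>x. x \<in> P \<Longrightarrow> \<kappa> (\<chi> x) = x"
    unfolding \<kappa>_def using hom_inv[OF P R \<chi>] by auto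
  have "restrict (\<chi> \<circ> restrict (\<psi> \<circ> \<kappa>) (\<chi> ` P)) (\<chi> ` P) \<in> Hom (\<chi> ` P) (\<chi> ` P)"
    using hom_comp[OF P' P P' hom_comp[OF P' P P \<kappa> \<psi>] hom_onto_image[OF P R \<chi>]] .
  moreover have "restrict (\<chi> \<circ> restrict (\<psi> \<circ> \<kappa>) (\<chi> ` P)) (\<chi> ` P) (\<chi> x) = \<chi> (\<psi> x)" if "x \<in> P" for x
    using that \<kappa>\<chi> by simp
  ultimately show ?thesis by blast
qed

lemma hom_aut_image: "subgroup P S \<Longrightarrow> \<phi> \<in> Hom P P \<Longrightarrow> \<phi> ` P = P"
  using hom_image_subset card_image[OF inj_homD(3)[OF hom_inj_hom]] finite_subgroup
  by (metis card_subset_eq)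

end

definition Aut_group :: "('a set \<Rightarrow> 'a set \<Rightarrow> ('a \<Rightarrow> 'a) set) \<Rightarrow> 'a set \<Rightarrow> ('a \<Rightarrow> 'a) monoid" where
  "Aut_group Hom P =
     \<lparr>carrier = Hom P P, monoid.mult = (\<lambda>f g. restrict (f \<circ> g) P), one = restrict (\<lambda>x. x) P\<rparr>"

lemma Aut_group_simps [simp]:
  "carrier (Aut_group Hom P) = Hom P P"
  "f \<otimes>\<^bsub>Aut_group Hom P\<^esub> g = restrict (f \<circ> g) P"
  "\<one>\<^bsub>Aut_group Hom P\<^esub> = restrict (\<lambda>x. x) P"
  by (simp_all add: Aut_group_def)

lemma (in group) Aut_group_pow_conj:
  assumes P: "subgroup P G" and g: "g \<in> fs_N G P"
  shows "restrict (fs_conj G g) P [^]\<^bsub>Aut_group Hom P\<^esub> (k::nat) = restrict (fs_conj G (g [^] k)) P"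
proof (induction k)
  case 0
  show ?case using subgroup.mem_carrier[OF P] by (auto simp: fun_eq_iff fs_conj_one)
next
  case (Suc k)
  have "g \<in> carrier G" "fs_conj G g ` P = P" using g unfolding fs_N_def by auto
  then show ?case
    using Suc subgroup.mem_carrier[OF P]
    by (auto simp: fun_eq_iff fs_conj_conj nat_pow_mult[symmetric] image_iff)
qed

context fusion
begin

lemma aut_apply: "subgroup P S \<Longrightarrow> f \<in> Hom P P \<Longrightarrow> x \<in> P \<Longrightarrow> f x \<in> P"
  using hom_image_subset by blast

lemma group_Aut_group:
  assumes P: "subgroup P S"
  shows "group (Aut_group Hom P)"
proof (rule groupI)
  show "f \<otimes>\<^bsub>Aut_group Hom P\<^esub> g \<in> carrier (Aut_group Hom P)"
    if "f \<in> carrier (Aut_group Hom P)" "g \<in> carrier (Aut_group Hom P)" for f g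
    using that hom_comp[OF P P P] by simp
  show "\<one>\<^bsub>Aut_group Hom P\<^esub> \<in> carrier (Aut_group Hom P)" using hom_id[OF P P] by simp
  show "f \<otimes>\<^bsub>Aut_group Hom P\<^esub> g \<otimes>\<^bsub>Aut_group Hom P\<^esub> h
          = f \<otimes>\<^bsub>Aut_group Hom P\<^esub> (g \<otimes>\<^bsub>Aut_group Hom P\<^esub> h)"
    if "h \<in> carrier (Aut_group Hom P)" for f g h
    using that aut_apply[OF P] by (auto simp: fun_eq_iff)
  show "\<one>\<^bsub>Aut_group Hom P\<^esub> \<otimes>\<^bsub>Aut_group Hom P\<^esub> f = f" if "f \<in> carrier (Aut_group Hom P)" for f
  proof -
    have f: "f \<in> Hom P P" using that by simp
    show ?thesis
      using aut_apply[OF P f] extensional_arb[OF inj_homD(1)[OF hom_inj_hom[OF P P f]]]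
      by (auto simp: fun_eq_iff)
  qed
  show "\<exists>g\<in>carrier (Aut_group Hom P). g \<otimes>\<^bsub>Aut_group Hom P\<^esub> f = \<one>\<^bsub>Aut_group Hom P\<^esub>"
    if "f \<in> carrier (Aut_group Hom P)" for f
  proof -
    have f: "f \<in> Hom P P" using that by simp
    then have "restrict (inv_into P f) P \<in> Hom P P" using hom_inv(1)[OF P P f] hom_aut_image[OF P f] by simp
    moreover have "restrict (restrict (inv_into P f) P \<circ> f) P = restrict (\<lambda>x. x) P"
      using hom_inv(2)[OF P P f] aut_apply[OF P f] hom_aut_image[OF P f] by (auto simp: fun_eq_iff)
    ultimately show ?thesis by (intro bexI[of _ "restrict (inv_into P f) P"]) auto
  qed
qed

lemma finite_Aut_group:
  assumes P: "subgroup P S"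
  shows "finite (carrier (Aut_group Hom P))"
proof -
  have "Hom P P \<subseteq> P \<rightarrow>\<^sub>E P" using inj_homD(1,2)[OF hom_inj_hom[OF P P]] by (auto simp: PiE_def Pi_def)
  moreover have "finite (P \<rightarrow>\<^sub>E P)" using finite_subgroup[OF P] by (simp add: finite_PiE)
  ultimately show ?thesis by (simp add: finite_subset)
qed

lemma Aut_group_inv_apply:
  assumes P: "subgroup P S" and f: "f \<in> Hom P P" and x: "x \<in> P"
  shows "f ((inv\<^bsub>Aut_group Hom P\<^esub> f) x) = x"
proof -
  interpret A: group "Aut_group Hom P" by (rule group_Aut_group[OF P])
  have "(f \<otimes>\<^bsub>Aut_group Hom P\<^esub> inv\<^bsub>Aut_group Hom P\<^esub> f) x = x" using A.r_inv f x by simp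
  then show ?thesis using x by simp
qed

lemma AutS_subset_Hom: "subgroup P S \<Longrightarrow> AutS S P \<subseteq> Hom P P"
  unfolding AutS_def fs_N_def using hom_conj by blast

lemma AutS_subgroup:
  assumes P: "subgroup P S"
  shows "subgroup (AutS S P) (Aut_group Hom P)"
proof -
  interpret A: group "Aut_group Hom P" by (rule group_Aut_group[OF P])
  have PS: "P \<subseteq> carrier S" using P subgroup.subset by blast
  have mult: "restrict (fs_conj S g) P \<otimes>\<^bsub>Aut_group Hom P\<^esub> restrict (fs_conj S h) P
      = restrict (fs_conj S (g \<otimes> h)) P" if g: "g \<in> fs_N S P" and h: "h \<in> fs_N S P" for g h
  proof -
    show ?thesis
      using fs_N_conj_mem[OF h] fs_conj_conj[OF fs_N_carrier[OF g] fs_N_carrier[OF h]] PS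
      by (auto simp: fun_eq_iff subsetD)
  qed
  show ?thesis
  proof (rule A.subgroupI)
    show "AutS S P \<subseteq> carrier (Aut_group Hom P)" using AutS_subset_Hom[OF P] by simp
    show "AutS S P \<noteq> {}" unfolding AutS_def using one_mem_fs_N[OF PS] by blast
  next
    fix f assume "f \<in> AutS S P"
    then obtain g where g: "g \<in> fs_N S P" and f: "f = restrict (fs_conj S g) P" unfolding AutS_def by blast
    have "restrict (fs_conj S (inv g)) P \<otimes>\<^bsub>Aut_group Hom P\<^esub> f = \<one>\<^bsub>Aut_group Hom P\<^esub>"
      using mult[OF fs_N_inv_closed[OF PS g] g] fs_N_carrier[OF g] PS f by (auto simp: fs_conj_one subsetD)
    then have "inv\<^bsub>Aut_group Hom P\<^esub> f = restrict (fs_conj S (inv g)) P"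
      using A.inv_equality AutS_subset_Hom[OF P] fs_N_inv_closed[OF PS g] g f unfolding AutS_def
      by (metis (mono_tags, lifting) Aut_group_simps(1) mem_Collect_eq subsetD)
    then show "inv\<^bsub>Aut_group Hom P\<^esub> f \<in> AutS S P"
      unfolding AutS_def using fs_N_inv_closed[OF PS g] by blast
  next
    fix f f' assume "f \<in> AutS S P" "f' \<in> AutS S P"
    then show "f \<otimes>\<^bsub>Aut_group Hom P\<^esub> f' \<in> AutS S P"
      unfolding AutS_def using mult fs_N_m_closed[OF PS] by blast
  qed
qed

lemma aut_p_element_conj_AutS:
  assumes p: "prime p" and P: "subgroup P S" and sylow: "sylow_in p (AutS S P) (Hom P P)"
    and \<psi>: "\<psi> \<in> Hom P P" and \<psi>_pow: "\<psi> [^]\<^bsub>Aut_group Hom P\<^esub> (p ^ n) = \<one>\<^bsub>Aut_group Hom P\<^esub>"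
  shows "\<exists>d\<in>Hom P P. \<exists>s\<in>fs_N S P. \<forall>x\<in>P. \<psi> (d x) = d (fs_conj S s x)"
proof -
  interpret A: group "Aut_group Hom P" by (rule group_Aut_group[OF P])
  have "card (AutS S P) = p ^ multiplicity p (order (Aut_group Hom P))"
    using sylow unfolding sylow_in_def order_def by simp
  then obtain d where d: "d \<in> Hom P P"
    and conj: "inv\<^bsub>Aut_group Hom P\<^esub> d \<otimes>\<^bsub>Aut_group Hom P\<^esub> \<psi> \<otimes>\<^bsub>Aut_group Hom P\<^esub> d \<in> AutS S P"
    using A.p_element_conj_into_sylow[OF finite_Aut_group[OF P] p AutS_subgroup[OF P]] \<psi> \<psi>_pow
    by fastforce
  then obtain s where s: "s \<in> fs_N S P"
    and eq: "inv\<^bsub>Aut_group Hom P\<^esub> d \<otimes>\<^bsub>Aut_group Hom P\<^esub> \<psi> \<otimes>\<^bsub>Aut_group Hom P\<^esub> d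
               = restrict (fs_conj S s) P"
    unfolding AutS_def by blast
  have "\<psi> (d x) = d (fs_conj S s x)" if x: "x \<in> P" for x
  proof -
    have "(inv\<^bsub>Aut_group Hom P\<^esub> d) (\<psi> (d x)) = fs_conj S s x"
      using fun_cong[OF eq, of x] x aut_apply[OF P d] by simp
    then show ?thesis using Aut_group_inv_apply[OF P d] aut_apply[OF P \<psi> aut_apply[OF P d x]] by metis
  qed
  then show ?thesis using d s by blast
qed

end

lemma centric_iff_self_centralizing:
  "centric S Hom P \<longleftrightarrow> (\<forall>\<chi>\<in>Hom P (carrier S). fs_C S (\<chi> ` P) \<subseteq> \<chi> ` P)"
  unfolding centric_def fs_Z_def by blast

context fusion
begin

lemma centric_imp_self_centralizing_image:
  assumes P0: "subgroup P0 S" and centric: "centric S Hom P0"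
    and P: "subgroup P S" "P0 \<subseteq> P" and R: "subgroup R S" and e: "e \<in> Hom P R"
  shows "fs_C S (e ` P0) \<subseteq> e ` P0"
proof -
  have "restrict e P0 \<in> Hom P0 (carrier S)"
    using hom_restrict[OF P(1) R e P0 P(2) subgroup_self] hom_image_subset[OF P(1) R e]
      subgroup.subset[OF R] P(2) by blast
  moreover have "restrict e P0 ` P0 = e ` P0" by auto
  ultimately show ?thesis using centric unfolding centric_iff_self_centralizing by metis
qed

lemma centric_imp_self_centralizing:
  assumes P: "subgroup P S" and centric: "centric S Hom P"
  shows "fs_C S P \<subseteq> P"
proof -
  have "restrict (\<lambda>x. x) P \<in> Hom P P" by (rule hom_id[OF P P order_refl])
  from centric_imp_self_centralizing_image[OF P centric P order_refl P this]
  show ?thesis by simp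
qed

lemma centric_image:
  assumes P: "subgroup P S" and centric: "centric S Hom P" and \<chi>: "\<chi> \<in> Hom P (carrier S)"
  shows "centric S Hom (\<chi> ` P)"
  unfolding centric_iff_self_centralizing
proof
  fix \<psi> assume \<psi>: "\<psi> \<in> Hom (\<chi> ` P) (carrier S)"
  have "restrict (\<psi> \<circ> \<chi>) P \<in> Hom P (carrier S)"
    using hom_comp[OF P hom_image_subgroup[OF P subgroup_self \<chi>] subgroup_self
        hom_onto_image[OF P subgroup_self \<chi>] \<psi>] .
  moreover have "restrict (\<psi> \<circ> \<chi>) P ` P = \<psi> ` \<chi> ` P" by auto
  ultimately show "fs_C S (\<psi> ` \<chi> ` P) \<subseteq> \<psi> ` \<chi> ` P"
    using centric unfolding centric_iff_self_centralizing by metis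
qed

lemma centric_supergroup:
  assumes Q: "subgroup Q S" and centric: "centric S Hom Q" and P: "subgroup P S" and QP: "Q \<subseteq> P"
  shows "centric S Hom P"
  unfolding centric_iff_self_centralizing
proof
  fix \<chi> assume \<chi>: "\<chi> \<in> Hom P (carrier S)"
  have "fs_C S (\<chi> ` Q) \<subseteq> \<chi> ` Q"
    by (rule centric_imp_self_centralizing_image[OF Q centric P QP subgroup_self \<chi>])
  moreover have "fs_C S (\<chi> ` P) \<subseteq> fs_C S (\<chi> ` Q)" using QP by (intro fs_C_antimono) blast
  ultimately show "fs_C S (\<chi> ` P) \<subseteq> \<chi> ` P" using QP by blast
qed

lemma centric_imp_fully_centralized:
  assumes R: "subgroup R S" and centric: "centric S Hom R"
  shows "fully_centralized S Hom R"
  unfolding fully_centralized_def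
proof
  fix \<chi> assume \<chi>: "\<chi> \<in> Hom R (carrier S)"
  have R': "subgroup (\<chi> ` R) S" by (rule hom_image_subgroup[OF R subgroup_self \<chi>])
  have "fs_C S (\<chi> ` R) = \<chi> ` R \<inter> fs_C S (\<chi> ` R)" "fs_C S R = R \<inter> fs_C S R"
    using centric_imp_self_centralizing[OF R' centric_image[OF R centric \<chi>]]
      centric_imp_self_centralizing[OF R centric] by blast+
  moreover have "card (\<chi> ` R \<inter> fs_C S (\<chi> ` R)) \<le> card (R \<inter> fs_C S R)"
    using card_center_le[OF R' finite_subgroup[OF R] hom_inj_hom_carrier[OF R' R hom_inv(1)[OF R subgroup_self \<chi>]]
        hom_inv(4)[OF R subgroup_self \<chi>]] .
  ultimately show "card (fs_C S (\<chi> ` R)) \<le> card (fs_C S R)" by simp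
qed

end

section \<open>Automorphisms that are trivial on a normal centric subgroup\<close>

context fusion
begin

lemma Aut_group_pow_displacement:
  assumes P: "subgroup P S" and P0: "subgroup P0 S" and P0P: "P0 \<subseteq> P"
    and \<psi>: "\<psi> \<in> Hom P P" and trivial: "\<And>y. y \<in> P0 \<Longrightarrow> \<psi> y = y"
    and displacement: "\<And>x. x \<in> P \<Longrightarrow> inv x \<otimes> \<psi> x \<in> P0"
  shows "\<psi> [^]\<^bsub>Aut_group Hom P\<^esub> (k::nat) = restrict (\<lambda>x. x \<otimes> (inv x \<otimes> \<psi> x) [^] k) P"
proof (induction k)
  case 0
  show ?case by (simp add: fun_eq_iff subgroup.mem_carrier[OF P])
next
  case (Suc k)
  interpret A: group "Aut_group Hom P" by (rule group_Aut_group[OF P])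
  have "\<psi> (x \<otimes> (inv x \<otimes> \<psi> x) [^] k) = x \<otimes> (inv x \<otimes> \<psi> x) [^] Suc k" if x: "x \<in> P" for x
  proof -
    define w where "w = inv x \<otimes> \<psi> x"
    have xS: "x \<in> carrier S" and \<psi>x: "\<psi> x \<in> carrier S"
      using x aut_apply[OF P \<psi> x] subgroup.mem_carrier[OF P] by auto
    then have wS: "w \<in> carrier S" unfolding w_def by simp
    have w: "w [^] m \<in> P0" for m :: nat
      by (induction m) (simp_all add: subgroup.one_closed[OF P0] subgroup.m_closed[OF P0]
          displacement[OF x, folded w_def])
    have "\<psi> (x \<otimes> w [^] k) = \<psi> x \<otimes> \<psi> (w [^] k)"
      using inj_homD(4)[OF hom_inj_hom[OF P P \<psi>] x] w P0P by blast
    also have "\<dots> = x \<otimes> w \<otimes> w [^] k"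
      using trivial[OF w] xS \<psi>x unfolding w_def by (simp add: m_assoc[symmetric])
    also have "\<dots> = x \<otimes> w [^] Suc k" using xS wS by (metis m_assoc nat_pow_closed nat_pow_Suc2)
    finally show ?thesis unfolding w_def .
  qed
  then show ?case
    using Suc A.nat_pow_Suc2[of \<psi> k] \<psi> aut_apply[OF P] subgroup.mem_carrier[OF P] displacement
    by (auto simp: fun_eq_iff)
qed

text \<open>Here \<open>\<psi>\<close> has \<open>p\<close>-power order since \<open>\<psi>\<^sup>k(x) = x (x\<^sup>-\<^sup>1\<psi>(x))\<^sup>k\<close> with \<open>x\<^sup>-\<^sup>1\<psi>(x) \<in> C\<^sub>S(P\<^sub>0) \<le> P\<^sub>0\<close>.
  Writing \<open>d\<^sup>-\<^sup>1\<psi>d = c\<^sub>s\<close>, the element \<open>s\<close> centralizes \<open>d\<^sup>-\<^sup>1(P\<^sub>0)\<close>, hence lies in it, and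
  \<open>\<psi> = c\<^bsub>d(s)\<^esub>\<close>.\<close>

lemma aut_fixing_normal_is_conj_of_sylow:
  assumes p: "prime p" and order: "order S = p ^ n"
    and P: "subgroup P S" and sylow: "sylow_in p (AutS S P) (Hom P P)"
    and P0: "subgroup P0 S" and P0P: "P0 \<subseteq> P"
    and normal: "\<And>x. x \<in> P \<Longrightarrow> fs_conj S x ` P0 = P0" and centric: "centric S Hom P0"
    and \<psi>: "\<psi> \<in> Hom P P" and trivial: "\<And>y. y \<in> P0 \<Longrightarrow> \<psi> y = y"
  shows "\<exists>z\<in>P0. \<forall>x\<in>P. \<psi> x = fs_conj S z x"
proof -
  interpret A: group "Aut_group Hom P" by (rule group_Aut_group[OF P])
  have \<psi>': "\<psi> \<in> inj_hom S P (carrier S)" by (rule hom_inj_hom_carrier[OF P P \<psi>])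
  have "fs_C S P0 \<subseteq> P0" by (rule centric_imp_self_centralizing[OF P0 centric])
  then have displacement: "inv x \<otimes> \<psi> x \<in> P0" if "x \<in> P" for x
    using inj_hom_fixing_normal_displacement[OF P \<psi>' P0P normal trivial that] by blast
  have "\<psi> [^]\<^bsub>Aut_group Hom P\<^esub> (p ^ n) = \<one>\<^bsub>Aut_group Hom P\<^esub>"
    using Aut_group_pow_displacement[OF P P0 P0P \<psi> trivial displacement] subgroup.mem_carrier[OF P]
      aut_apply[OF P \<psi>] pow_order_eq_1 order by (auto simp: fun_eq_iff)
  then obtain d s where d: "d \<in> Hom P P" and s: "s \<in> fs_N S P"
    and conj: "\<And>x. x \<in> P \<Longrightarrow> \<psi> (d x) = d (fs_conj S s x)"
    using aut_p_element_conj_AutS[OF p P sylow \<psi>] by blast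
  define e where "e = inv\<^bsub>Aut_group Hom P\<^esub> d"
  have e: "e \<in> Hom P P" unfolding e_def using A.inv_closed d by simp
  have de: "\<And>x. x \<in> P \<Longrightarrow> d (e x) = x" unfolding e_def by (rule Aut_group_inv_apply[OF P d])
  have sS: "s \<in> carrier S" and sP: "fs_conj S s ` P = P" using s unfolding fs_N_def by auto
  have "s \<in> fs_C S (e ` P0)"
  proof -
    have "fs_conj S s (e y) = e y" if y: "y \<in> P0" for y
    proof -
      have eyP: "e y \<in> P" using aut_apply[OF P e] y P0P by blast
      have "d (fs_conj S s (e y)) = d (e y)" using conj[OF eyP] de trivial y P0P by auto
      then show ?thesis
        using inj_onD[OF hom_inj_on[OF P P d]] eyP sP by blast
    qed
    moreover have "e y \<in> carrier S" if "y \<in> P0" for y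
      using aut_apply[OF P e] that P0P subgroup.mem_carrier[OF P] by blast
    ultimately show ?thesis unfolding fs_C_def using sS fs_conj_eq_self_iff[OF sS] by auto
  qed
  then obtain z where z: "z \<in> P0" "s = e z"
    using centric_imp_self_centralizing_image[OF P0 centric P P0P P e] by blast
  have "\<psi> x = fs_conj S z x" if x: "x \<in> P" for x
  proof -
    have zP: "z \<in> P" and exP: "e x \<in> P" using z P0P aut_apply[OF P e x] by auto
    have "\<psi> x = d (fs_conj S (e z) (e x))" using conj[OF exP] de[OF x] z by simp
    also have "\<dots> = fs_conj S z x"
      using inj_hom_fs_conj[OF P hom_inj_hom_carrier[OF P P d] aut_apply[OF P e zP] exP] de zP x
      by simp
    finally show ?thesis .
  qed
  then show ?thesis using z by blast
qed

lemma exists_fully_normalized_image: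
  assumes P: "subgroup P S"
  shows "\<exists>\<chi>\<in>Hom P (carrier S). fully_normalized S Hom (\<chi> ` P)"
proof -
  have S: "subgroup (carrier S) S" by (rule subgroup_self)
  define N where "N = (\<lambda>\<phi>. card (fs_N S (\<phi> ` P))) ` Hom P (carrier S)"
  have "N \<subseteq> {..card (carrier S)}"
    unfolding N_def fs_N_def using finite_carrier by (auto intro!: card_mono)
  then have "finite N" by (rule finite_subset) simp
  moreover have "N \<noteq> {}" unfolding N_def using hom_id[OF P S subgroup.subset[OF P]] by blast
  moreover define m where "m = Max N"
  ultimately have "m \<in> N" and max: "\<And>k. k \<in> N \<Longrightarrow> k \<le> m" by auto
  from \<open>m \<in> N\<close> obtain \<chi> where \<chi>: "\<chi> \<in> Hom P (carrier S)" and "card (fs_N S (\<chi> ` P)) = m"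
    unfolding N_def by blast
  with max have max: "card (fs_N S (\<phi> ` P)) \<le> card (fs_N S (\<chi> ` P))" if "\<phi> \<in> Hom P (carrier S)" for \<phi>
    using that unfolding N_def by (simp add: image_eqI)
  have "card (fs_N S (\<psi> ` \<chi> ` P)) \<le> card (fs_N S (\<chi> ` P))" if \<psi>: "\<psi> \<in> Hom (\<chi> ` P) (carrier S)" for \<psi>
  proof -
    have "restrict (\<psi> \<circ> \<chi>) P \<in> Hom P (carrier S)"
      using hom_comp[OF P hom_image_subgroup[OF P S \<chi>] S hom_onto_image[OF P S \<chi>] \<psi>] .
    moreover have "restrict (\<psi> \<circ> \<chi>) P ` P = \<psi> ` \<chi> ` P" by auto
    ultimately show ?thesis using max by metis
  qed
  then show ?thesis unfolding fully_normalized_def using \<chi> by blast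
qed

text \<open>Transport \<open>P\<close> to a fully normalized \<open>\<F>\<close>-conjugate, where \<open>Aut\<^sub>S\<close> is Sylow.\<close>

lemma aut_fixing_normal_is_conj:
  assumes p: "prime p" and order: "order S = p ^ n"
    and sylow: "\<And>Q. subgroup Q S \<Longrightarrow> fully_normalized S Hom Q \<Longrightarrow> sylow_in p (AutS S Q) (Hom Q Q)"
    and P: "subgroup P S" and P0: "subgroup P0 S" and P0P: "P0 \<subseteq> P"
    and normal: "\<And>x. x \<in> P \<Longrightarrow> fs_conj S x ` P0 = P0" and centric: "centric S Hom P0"
    and \<psi>: "\<psi> \<in> Hom P P" and trivial: "\<And>y. y \<in> P0 \<Longrightarrow> \<psi> y = y"
  shows "\<exists>z\<in>P0. \<forall>x\<in>P. \<psi> x = fs_conj S z x"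
proof -
  have S: "subgroup (carrier S) S" by (rule subgroup_self)
  obtain \<chi> where \<chi>S: "\<chi> \<in> Hom P (carrier S)" and fn: "fully_normalized S Hom (\<chi> ` P)"
    using exists_fully_normalized_image[OF P] by blast
  define P' where "P' = \<chi> ` P"
  define P0' where "P0' = \<chi> ` P0"
  have P': "subgroup P' S" unfolding P'_def by (rule hom_image_subgroup[OF P S \<chi>S])
  have \<chi>: "\<chi> \<in> Hom P P'" unfolding P'_def by (rule hom_onto_image[OF P S \<chi>S])
  obtain \<psi>' where \<psi>': "\<psi>' \<in> Hom P' P'" and \<psi>'_\<chi>: "\<forall>x\<in>P. \<psi>' (\<chi> x) = \<chi> (\<psi> x)"
    using aut_transport[OF P S \<chi>S \<psi>] unfolding P'_def by blast
  have \<chi>0: "restrict \<chi> P0 \<in> Hom P0 (carrier S)"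
    using hom_restrict[OF P S \<chi>S P0 P0P S] hom_image_subset[OF P S \<chi>S] P0P by blast
  have image: "restrict \<chi> P0 ` P0 = P0'" unfolding P0'_def by auto
  have P0': "subgroup P0' S" using hom_image_subgroup[OF P0 S \<chi>0] unfolding image .
  have centric': "centric S Hom P0'" using centric_image[OF P0 centric \<chi>0] unfolding image .
  have normal': "fs_conj S u ` P0' = P0'" if "u \<in> P'" for u
    using that inj_hom_image_normal[OF P hom_inj_hom_carrier[OF P S \<chi>S] P0P normal]
    unfolding P'_def P0'_def by blast
  have trivial': "\<psi>' y = y" if "y \<in> P0'" for y
    using that \<psi>'_\<chi> P0P trivial unfolding P0'_def by auto
  obtain z' where z': "z' \<in> P0'" and conj': "\<forall>u\<in>P'. \<psi>' u = fs_conj S z' u"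
    using aut_fixing_normal_is_conj_of_sylow[OF p order P' sylow[OF P' fn[folded P'_def]] P0'
        _ normal' centric' \<psi>' trivial'] P0P unfolding P0'_def P'_def by blast
  obtain z where z: "z \<in> P0" "z' = \<chi> z" using z' unfolding P0'_def by blast
  have "\<psi> x = fs_conj S z x" if x: "x \<in> P" for x
  proof -
    have zP: "z \<in> P" using z P0P by blast
    have "\<chi> (\<psi> x) = \<chi> (fs_conj S z x)"
      using \<psi>'_\<chi> x conj' z hom_fs_conj[OF P P' \<chi> zP x] unfolding P'_def by simp
    then show ?thesis
      using inj_onD[OF hom_inj_on[OF P P' \<chi>]] aut_apply[OF P \<psi> x] fs_conj_mem_subgroup[OF P zP x] by blast
  qed
  then show ?thesis using z by blast
qed

end

section \<open>Saturated subsystems\<close>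

locale saturated_subsystem =
  fixes p :: nat and S (structure) and HomF T HomG
  assumes p_group: "p_group p S" and saturated_F: "saturated p S HomF"
    and subsystem: "subsystem S HomF T HomG"
    and saturated_G: "saturated p (S\<lparr>carrier := T\<rparr>) HomG"
begin

abbreviation S\<^sub>T where "S\<^sub>T \<equiv> S\<lparr>carrier := T\<rparr>"

lemma prime_p: "prime p" and order_p_power: "\<exists>n. order S = p ^ n"
  using p_group unfolding p_group_def order_def by auto

lemma subgroup_T: "subgroup T S"
  using subsystem unfolding subsystem_def by blast

lemma HomG_subset_HomF:
  "subgroup P S \<Longrightarrow> subgroup R S \<Longrightarrow> P \<subseteq> T \<Longrightarrow> R \<subseteq> T \<Longrightarrow> HomG P R \<subseteq> HomF P R"
  using subsystem unfolding subsystem_def by blast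

sublocale F: fusion S HomF
  using p_group saturated_F unfolding p_group_def saturated_def by (simp add: fusion_def)

sublocale G: fusion "S\<^sub>T" HomG
  unfolding fusion_def
proof (intro conjI)
  show "group (S\<^sub>T)" by (rule F.subgroup_imp_group[OF subgroup_T])
  show "finite (carrier (S\<^sub>T))" using F.finite_subgroup[OF subgroup_T] by simp
  show "fusion_system (S\<^sub>T) HomG" using subsystem unfolding subsystem_def by blast
qed

lemma subgroup_G_iff: "subgroup P (S\<^sub>T) \<longleftrightarrow> subgroup P S \<and> P \<subseteq> T"
  by (rule F.subgroup_carrier_update_iff[OF subgroup_T])

lemma centric_in_subsystem:
  assumes R: "subgroup R S" "R \<subseteq> T" and centric: "centric S HomF R"
  shows "centric (S\<^sub>T) HomG R"
  unfolding centric_iff_self_centralizing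
proof
  fix \<chi> assume "\<chi> \<in> HomG R (carrier (S\<^sub>T))"
  then have "\<chi> \<in> HomF R T" using HomG_subset_HomF[OF R(1) subgroup_T R(2)] by auto
  then have "\<chi> \<in> HomF R (carrier S)"
    using F.hom_retarget[OF R(1) subgroup_T _ F.subgroup_self] F.hom_image_subset[OF R(1) subgroup_T]
      subgroup.subset[OF subgroup_T] by blast
  then have "fs_C S (\<chi> ` R) \<subseteq> \<chi> ` R" using centric unfolding centric_iff_self_centralizing by blast
  then show "fs_C (S\<^sub>T) (\<chi> ` R) \<subseteq> \<chi> ` R"
    using F.fs_C_carrier_update[OF subgroup_T] by blast
qed

lemma sylow_F: "subgroup Q S \<Longrightarrow> fully_normalized S HomF Q \<Longrightarrow> sylow_in p (AutS S Q) (HomF Q Q)"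
  using saturated_F unfolding saturated_def by blast

lemma extension_G:
  "subgroup Q (S\<^sub>T) \<Longrightarrow> \<phi> \<in> HomG Q T \<Longrightarrow>
   fully_centralized (S\<^sub>T) HomG (\<phi> ` Q) \<Longrightarrow>
   \<exists>\<psi>\<in>HomG (N_phi (S\<^sub>T) Q \<phi>) T. \<forall>x\<in>Q. \<psi> x = \<phi> x"
  using saturated_G unfolding saturated_def by simp

lemma HomF_into_carrier: "subgroup P S \<Longrightarrow> \<phi> \<in> HomF P T \<Longrightarrow> \<phi> \<in> HomF P (carrier S)"
  using F.hom_retarget[OF _ subgroup_T _ F.subgroup_self] F.hom_image_subset[OF _ subgroup_T]
    subgroup.subset[OF subgroup_T] by blast

text \<open>The saturation axiom of \<open>\<G>\<close> extends \<open>\<phi>|\<^bsub>P\<^sub>0\<^esub>\<close> to \<open>N\<^sub>\<phi>\<close>, which contains \<open>P\<close>;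
  \<open>\<phi>(P\<^sub>0)\<close> is fully centralized in \<open>\<G>\<close> because it is centric.\<close>

lemma restriction_extends_in_subsystem:
  assumes P: "subgroup P S" "P \<subseteq> T" and P0: "subgroup P0 S" and P0P: "P0 \<subseteq> P"
    and normal: "\<And>x. x \<in> P \<Longrightarrow> fs_conj S x ` P0 = P0" and centric: "centric S HomF P0"
    and \<phi>: "\<phi> \<in> HomF P T" and \<phi>0: "restrict \<phi> P0 \<in> HomG P0 T"
  shows "\<exists>\<psi>\<in>HomG P T. \<forall>y\<in>P0. \<psi> y = \<phi> y"
proof -
  have T': "subgroup T S\<^sub>T" using subgroup_G_iff subgroup_T by blast
  have P': "subgroup P S\<^sub>T" and P0': "subgroup P0 S\<^sub>T" using subgroup_G_iff P P0 P0P by auto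
  have \<phi>0F: "restrict \<phi> P0 \<in> HomF P0 (carrier S)"
    using HomF_into_carrier[OF P0] HomG_subset_HomF[OF P0 subgroup_T] \<phi>0 P0P P by blast
  have image: "restrict \<phi> P0 ` P0 = \<phi> ` P0" by auto
  have "subgroup (\<phi> ` P0) S" "\<phi> ` P0 \<subseteq> T"
    using F.hom_image_subgroup[OF P0 F.subgroup_self \<phi>0F] F.hom_image_subset[OF P(1) subgroup_T \<phi>] P0P
    unfolding image by auto
  moreover have "centric S HomF (\<phi> ` P0)" using F.centric_image[OF P0 centric \<phi>0F] unfolding image .
  ultimately have "fully_centralized S\<^sub>T HomG (\<phi> ` P0)"
    using G.centric_imp_fully_centralized centric_in_subsystem subgroup_G_iff by blast
  then obtain \<psi> where \<psi>: "\<psi> \<in> HomG (N_phi S\<^sub>T P0 (restrict \<phi> P0)) T"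
    and agree: "\<forall>y\<in>P0. \<psi> y = \<phi> y"
    using extension_G[OF P0' \<phi>0] image by auto
  have \<phi>': "\<phi> \<in> inj_hom S\<^sub>T P (carrier S\<^sub>T)"
    using F.hom_inj_hom[OF P(1) subgroup_T \<phi>] by simp
  have normal': "fs_conj S\<^sub>T x ` P0 = P0" if "x \<in> P" for x
  proof -
    have "x \<in> T" using that P by blast
    then show ?thesis using normal[OF that] F.fs_conj_carrier_update[OF subgroup_T] by simp
  qed
  have "P \<subseteq> N_phi S\<^sub>T P0 (restrict \<phi> P0)" by (rule G.subgroup_subset_N_phi[OF P' \<phi>' P0P normal'])
  moreover have "subgroup (N_phi S\<^sub>T P0 (restrict \<phi> P0)) S\<^sub>T"
    using G.N_phi_subgroup[OF P0'] G.hom_inj_hom_carrier[OF P0' T' \<phi>0] by simp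
  ultimately have "restrict \<psi> P \<in> HomG P T"
    using G.hom_restrict[OF _ T' \<psi> P' _ T'] G.hom_image_subset[OF _ T' \<psi>] by blast
  moreover have "\<forall>y\<in>P0. restrict \<psi> P y = \<phi> y" using agree P0P by auto
  ultimately show ?thesis by blast
qed

text \<open>If \<open>\<psi> \<in> Hom\<^sub>\<G>(P, T)\<close> agrees with \<open>\<phi>\<close> on \<open>P\<^sub>0\<close>, then \<open>\<phi>(P) = \<psi>(P)\<close> and
  \<open>\<gamma> = \<psi>\<^sup>-\<^sup>1\<phi> \<in> Aut\<^sub>\<F>(P)\<close> is trivial on \<open>P\<^sub>0\<close>, hence \<open>\<gamma> = c\<^sub>z\<close> with \<open>z \<in> P\<^sub>0\<close> and \<open>\<phi> = \<psi> \<circ> c\<^sub>z\<close>.\<close>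

lemma hom_in_subsystem_if_restriction:
  assumes P: "subgroup P S" "P \<subseteq> T" and P0: "subgroup P0 S" and P0P: "P0 \<subseteq> P"
    and normal: "\<And>x. x \<in> P \<Longrightarrow> fs_conj S x ` P0 = P0" and centric: "centric S HomF P0"
    and \<phi>: "\<phi> \<in> HomF P T" and \<phi>0: "restrict \<phi> P0 \<in> HomG P0 T"
  shows "\<phi> \<in> HomG P T"
proof -
  obtain n where order: "order S = p ^ n" using order_p_power by blast
  have T: "subgroup T S" and T': "subgroup T S\<^sub>T" using subgroup_T subgroup_G_iff by auto
  have P': "subgroup P S\<^sub>T" using subgroup_G_iff P by blast
  obtain \<psi> where \<psi>: "\<psi> \<in> HomG P T" and agree: "\<And>y. y \<in> P0 \<Longrightarrow> \<psi> y = \<phi> y"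
    using restriction_extends_in_subsystem[OF P P0 P0P normal centric \<phi> \<phi>0] by blast
  have \<psi>F: "\<psi> \<in> HomF P T" using HomG_subset_HomF[OF P(1) T P(2)] \<psi> by blast
  have "fs_C S (\<phi> ` P0) \<subseteq> \<phi> ` P0"
    by (rule F.centric_imp_self_centralizing_image[OF P0 centric P(1) P0P T \<phi>])
  then have same_image: "\<phi> ` P = \<psi> ` P"
    using F.inj_hom_images_eq[OF P(1) F.finite_subgroup[OF P(1)] F.hom_inj_hom_carrier[OF P(1) T \<phi>]
        F.hom_inj_hom_carrier[OF P(1) T \<psi>F] P0P normal agree] by blast
  have "\<exists>\<gamma>\<in>HomF P P. \<forall>x\<in>P. \<phi> x = \<psi> (\<gamma> x)"
    by (rule F.hom_factor_same_image[OF P(1) T \<phi> \<psi>F same_image])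
  then obtain \<gamma> where \<gamma>: "\<gamma> \<in> HomF P P" and \<phi>_eq: "\<forall>x\<in>P. \<phi> x = \<psi> (\<gamma> x)" ..
  have "\<gamma> y = y" if "y \<in> P0" for y
  proof -
    have yP: "y \<in> P" using that P0P by blast
    then have "\<psi> (\<gamma> y) = \<psi> y" using \<phi>_eq agree[OF that] by simp
    then show ?thesis using inj_onD[OF F.hom_inj_on[OF P(1) T \<psi>F]] F.aut_apply[OF P(1) \<gamma> yP] yP by blast
  qed
  then obtain z where z: "z \<in> P0" and conj: "\<forall>x\<in>P. \<gamma> x = fs_conj S z x"
    using F.aut_fixing_normal_is_conj[OF prime_p order sylow_F P(1) P0 P0P normal centric \<gamma>] by blast
  have zT: "z \<in> T" using z P0P P by blast
  have "fs_conj S z ` P \<subseteq> P" using F.fs_conj_mem_subgroup[OF P(1)] z P0P by blast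
  then have "restrict (fs_conj S z) P \<in> HomG P P"
    using G.hom_conj[OF P' P', of z] zT by (simp add: F.fs_conj_carrier_update[OF T zT])
  then have "restrict (\<psi> \<circ> restrict (fs_conj S z) P) P \<in> HomG P T" by (rule G.hom_comp[OF P' P' T' _ \<psi>])
  moreover have "restrict (\<psi> \<circ> restrict (fs_conj S z) P) P = \<phi>"
    using extensionalityI[OF _ inj_homD(1)[OF F.hom_inj_hom[OF P(1) T \<phi>]]] \<phi>_eq conj by simp
  ultimately show ?thesis by simp
qed

lemma HomF_subset_HomG:
  assumes Q: "subgroup Q S" and centric: "centric S HomF Q" and base: "HomF Q T \<subseteq> HomG Q T"
    and P: "subgroup P S" "Q \<subseteq> P" "P \<subseteq> T"
  shows "HomF P T \<subseteq> HomG P T"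
  using P
proof (induction "card P" arbitrary: P rule: less_induct)
  case less
  show ?case
  proof (cases "P = Q")
    case True
    then show ?thesis using base by simp
  next
    case False
    obtain n where order: "order S = p ^ n" using order_p_power by blast
    have "Q \<subset> P" using False less.prems(2) by blast
    from F.exists_normal_between[OF F.finite_carrier prime_p order Q less.prems(1) this]
    obtain P0 where P0: "subgroup P0 S" "Q \<subseteq> P0" "P0 \<subset> P"
      and normal: "\<forall>x\<in>P. fs_conj S x ` P0 = P0" by blast
    have "card P0 < card P" using F.finite_subgroup[OF less.prems(1)] P0(3) by (rule psubset_card_mono)
    then have IH: "HomF P0 T \<subseteq> HomG P0 T" using less.hyps P0 less.prems by blast
    show ?thesis
    proof
      fix \<phi> assume \<phi>: "\<phi> \<in> HomF P T"
      have "restrict \<phi> P0 \<in> HomG P0 T"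
        using F.hom_restrict[OF less.prems(1) subgroup_T \<phi> P0(1) _ subgroup_T] P0(3)
          F.hom_image_subset[OF less.prems(1) subgroup_T \<phi>] IH by blast
      then show "\<phi> \<in> HomG P T"
        using hom_in_subsystem_if_restriction[OF less.prems(1,3) P0(1) _ normal[rule_format]
            F.centric_supergroup[OF Q centric P0(1,2)] \<phi>] P0(3) by blast
    qed
  qed
qed

lemma subgroup_T_eq_carrier:
  assumes Aut: "HomF T T \<subseteq> HomG T T" and self_centralizing: "fs_C S T \<subseteq> T"
  shows "T = carrier S"
proof (rule ccontr)
  assume "T \<noteq> carrier S"
  then have "T \<subset> carrier S" using subgroup.subset[OF subgroup_T] by blast
  obtain n where order: "order S = p ^ n" using order_p_power by blast
  have T: "subgroup T S" and T': "subgroup T S\<^sub>T" using subgroup_T subgroup_G_iff by auto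
  have TS: "T \<subseteq> carrier S" using subgroup.subset[OF T] .
  obtain g where g: "g \<in> carrier S - T" and gT: "fs_conj S g ` T = T"
    using F.normalizer_grows[OF F.finite_carrier prime_p order T F.subgroup_self \<open>T \<subset> carrier S\<close>] by blast
  then have gN: "g \<in> fs_N S T" unfolding fs_N_def by blast
  define c where "c = restrict (fs_conj S g) T"
  have c: "c \<in> HomG T T" unfolding c_def using F.hom_conj[OF T T] g gT Aut by blast
  have "fully_normalized S\<^sub>T HomG T" unfolding fully_normalized_def using G.hom_aut_image[OF T'] by simp
  then have sylow: "sylow_in p (AutS S\<^sub>T T) (HomG T T)"
    using saturated_G T' unfolding saturated_def by blast
  have "c [^]\<^bsub>Aut_group HomG T\<^esub> (p ^ n) = restrict (fs_conj S (g [^] (p ^ n))) T"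
    unfolding c_def by (rule F.Aut_group_pow_conj[OF T gN])
  also have "\<dots> = \<one>\<^bsub>Aut_group HomG T\<^esub>"
    using F.pow_order_eq_1[of g] g order TS by (auto simp: fun_eq_iff F.fs_conj_one subsetD)
  finally obtain d s where d: "d \<in> HomG T T" and s: "s \<in> fs_N S\<^sub>T T"
    and conj: "\<And>x. x \<in> T \<Longrightarrow> c (d x) = d (fs_conj S\<^sub>T s x)"
    using G.aut_p_element_conj_AutS[OF prime_p T' sylow c] by blast
  have sT: "s \<in> T" using s F.fs_N_carrier_update[OF T] by blast
  have dsT: "d s \<in> T" using G.hom_image_subset[OF T' T' d] sT by blast
  have "fs_conj S g x = fs_conj S (d s) x" if x: "x \<in> T" for x
  proof -
    obtain u where u: "u \<in> T" "x = d u" using x G.hom_aut_image[OF T' d] by blast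
    have "fs_conj S g x = d (fs_conj S\<^sub>T s u)" using conj[OF u(1)] u x unfolding c_def by simp
    also have "\<dots> = fs_conj S\<^sub>T (d s) x" using G.hom_fs_conj[OF T' T' d sT u(1)] u by simp
    finally show ?thesis using F.fs_conj_carrier_update[OF T dsT] by simp
  qed
  then have "inv (d s) \<otimes> g \<in> T"
    using F.fs_conj_eq_imp_fs_C[OF TS] g dsT TS self_centralizing by blast
  then have "d s \<otimes> (inv (d s) \<otimes> g) \<in> T" using subgroup.m_closed[OF T dsT] by blast
  then show False using g dsT TS by (simp add: F.m_assoc[symmetric] subsetD)
qed

end

theorem lemma2p7:
  fixes S :: "('a, 'b) monoid_scheme" and p :: nat
    and HomF HomG :: "'a set \<Rightarrow> 'a set \<Rightarrow> ('a \<Rightarrow> 'a) set" and T Q :: "'a set"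
  assumes "p_group p S"
    and "saturated p S HomF"
    and "subsystem S HomF T HomG"
    and "saturated p (S\<lparr>carrier := T\<rparr>) HomG"
    and "subgroup Q S" and "Q \<subseteq> T"
    and "centric S HomF Q"
    and "HomF Q T = HomG Q T"
  shows "HomF T T = HomG T T \<and> T = carrier S"
proof -
  interpret saturated_subsystem p S HomF T HomG
    using assms(1-4) by unfold_locales
  have "HomF T T \<subseteq> HomG T T"
    using HomF_subset_HomG[OF assms(5,7)] assms(6,8) subgroup_T by blast
  moreover have "HomG T T \<subseteq> HomF T T" using HomG_subset_HomF subgroup_T by blast
  moreover have "centric S HomF T" using F.centric_supergroup[OF assms(5,7) subgroup_T assms(6)] .
  then have "fs_C S T \<subseteq> T" using F.centric_imp_self_centralizing[OF subgroup_T] by blast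
  ultimately show ?thesis using subgroup_T_eq_carrier by blast
qed

end
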